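(* (1) For every $k\ge1$ and every choice of signs, the $0$-model $\mathcal V=(V,(\cdot,\cdot),R)$ is indecomposable. (2) If in addition $f_i'(u)+1\ne0$ for all $u$ and all $i$, then the manifold $\mathcal M_F$ is locally indecomposable at every point.
   Context: Fix an integer $k\ge 1$ and signs $\varepsilon_1,\dots,\varepsilon_k\in\{\pm1\}$. Model: let $V=\mathbb R^{3k+2}$ with basis $\{U_0,\dots,U_k,V_0,\dots,V_k,S_1,\dots,S_k\}$, let $(\cdot,\cdot)$ be the symmetric inner product whose only nonzero values on pairs of basis vectors are $(U_i,V_i)=(V_i,U_i)=1$ for $0\le i\le k$ and $(S_i,S_i)=\varepsilon_i$ for $1\le i\le k$, and let $R$ be the algebraic curvature tensor on $V$ (a 4-linear form with $R(x,y,z,w)=-R(y,x,z,w)=R(z,w,x,y)$ and $R(x,y,z,w)+R(y,z,x,w)+R(z,x,y,w)=0$) whose only nonzero values on 4-tuples of basis vectors are those obtained from $R(U_0,U_i,U_i,S_i)=1$ ($1\le i\le k$) by these symmetries. Manifold: let $f_1,\dots,f_k:\mathbb R\to\mathbb R$ be smooth, $F=(f_1,\dots,f_k)$. On $\mathbb R^{3k+2}$ with coordinates $(u_0,\dots,u_k,v_0,\dots,v_k,s_1,\dots,s_k)$ let $g_F$ be the symmetric metric whose only nonzero components on coordinate vector fields are (up to symmetry), for $1\le i\le k$ and $0\le i',j\le k$: $g_F(\partial_{u_0},\partial_{u_i})=2f_i(u_i)s_i$, $g_F(\partial_{u_i},\partial_{u_i})=-2u_0s_i$, $g_F(\partial_{u_{i'}},\partial_{v_j})=\delta_{i'j}$,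 $g_F(\partial_{s_i},\partial_{s_i})=\varepsilon_i$; $\mathcal M_F=(\mathbb R^{3k+2},g_F)$. A $0$-model $(W,\langle\cdot,\cdot\rangle,T)$ (vector space, nondegenerate symmetric inner product, algebraic curvature tensor) is decomposable if there is a nontrivial orthogonal direct sum $W=W_1\oplus W_2$ such that $T=T_1\oplus T_2$ with $T_p$ a tensor on $W_p$ (i.e. $T(x_1+x_2,y_1+y_2,z_1+z_2,w_1+w_2)=T_1(x_1,y_1,z_1,w_1)+T_2(x_2,y_2,z_2,w_2)$ for $x_p,y_p,z_p,w_p\in W_p$); it is indecomposable otherwise. A pseudo-Riemannian manifold is locally decomposable at $P$ if some neighborhood of $P$ is isometric to a product $(\mathcal O_1\times\mathcal O_2,g_1\oplus g_2)$ of two pseudo-Riemannian manifolds of positive dimension; otherwise it is locally indecomposable at $P$. *)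

theory Defs
  imports "HOL-Analysis.Analysis"
begin

fun Ck :: "nat \<Rightarrow> 'a::real_normed_vector set \<Rightarrow> ('a \<Rightarrow> 'b::real_normed_vector) \<Rightarrow> bool" where
  "Ck 0 S f = continuous_on S f"
| "Ck (Suc m) S f = (\<exists>f'. (\<forall>x\<in>S. (f has_derivative f' x) (at x)) \<and> (\<forall>v. Ck m S (\<lambda>x. f' x v)))"

definition smooth_on :: "'a::real_normed_vector set \<Rightarrow> ('a \<Rightarrow> 'b::real_normed_vector) \<Rightarrow> bool" where
  "smooth_on S f \<longleftrightarrow> (\<forall>m. Ck m S f)"

definition bilin :: "real^'n^'n \<Rightarrow> real^'n \<Rightarrow> real^'n \<Rightarrow> real" where
  "bilin M v w = (\<Sum>i\<in>UNIV. \<Sum>j\<in>UNIV. v$i * M$i$j * w$j)"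

definition metric_on :: "(real^'n) set \<Rightarrow> (real^'n \<Rightarrow> real^'n^'n) \<Rightarrow> bool" where
  "metric_on S g \<longleftrightarrow> smooth_on S g \<and> (\<forall>x\<in>S. transpose (g x) = g x \<and> det (g x) \<noteq> 0)"

definition splice :: "'n set \<Rightarrow> real^'n \<Rightarrow> real^'n \<Rightarrow> real^'n" where
  "splice I a b = (\<chi> i. if i \<in> I then a$i else b$i)"

text \<open>(R^n, g) is locally decomposable at P: an open neighbourhood U of P is isometric
 (via a diffeomorphism phi with inverse psi) to an open product W = A x B (coordinates
 split as I and its nonempty complement) carrying a product metric h = g1 (+) g2.\<close>
definition locally_decomposable_at :: "(real^'n::finite \<Rightarrow> real^'n^'n) \<Rightarrow> real^'n \<Rightarrow> bool" where
  "locally_decomposable_at g P \<longleftrightarrow>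
    (\<exists>U W (\<phi>::real^'n \<Rightarrow> real^'n) \<psi> h I A B.
      open U \<and> P \<in> U \<and> open W \<and> I \<noteq> {} \<and> I \<noteq> UNIV \<and>
      W = {splice I a b | a b. a \<in> A \<and> b \<in> B} \<and>
      metric_on W h \<and>
      (\<forall>x\<in>W. \<forall>i j. i \<in> I \<and> j \<notin> I \<longrightarrow> h x $ i $ j = 0 \<and> h x $ j $ i = 0) \<and>
      (\<forall>x\<in>W. \<forall>y\<in>W. \<forall>i\<in>I. \<forall>j\<in>I. h x $ i $ j = h (splice I x y) $ i $ j) \<and>
      (\<forall>x\<in>W. \<forall>y\<in>W. \<forall>i\<in>-I. \<forall>j\<in>-I. h x $ i $ j = h (splice I y x) $ i $ j) \<and>
      \<phi> ` W = U \<and> \<psi> ` U = W \<and> (\<forall>x\<in>W. \<psi> (\<phi> x) = x) \<and> (\<forall>y\<in>U. \<phi> (\<psi> y) = y) \<and>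
      smooth_on W \<phi> \<and> smooth_on U \<psi> \<and>
      (\<forall>x\<in>W. \<forall>i j. h x $ i $ j =
          bilin (g (\<phi> x)) (frechet_derivative \<phi> (at x) (axis i 1))
                            (frechet_derivative \<phi> (at x) (axis j 1))))"

definition decomposable_model ::
  "('v::real_vector \<Rightarrow> 'v \<Rightarrow> real) \<Rightarrow> ('v \<Rightarrow> 'v \<Rightarrow> 'v \<Rightarrow> 'v \<Rightarrow> real) \<Rightarrow> bool" where
  "decomposable_model ip T \<longleftrightarrow>
    (\<exists>W1 W2 (T1::'v \<Rightarrow> 'v \<Rightarrow> 'v \<Rightarrow> 'v \<Rightarrow> real) (T2::'v \<Rightarrow> 'v \<Rightarrow> 'v \<Rightarrow> 'v \<Rightarrow> real).
      subspace W1 \<and> subspace W2 \<and> W1 \<noteq> {0} \<and> W2 \<noteq> {0} \<and> W1 \<inter> W2 = {0} \<and>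
      {x + y | x y. x \<in> W1 \<and> y \<in> W2} = UNIV \<and>
      (\<forall>x\<in>W1. \<forall>y\<in>W2. ip x y = 0) \<and>
      (\<forall>x1\<in>W1. \<forall>y1\<in>W1. \<forall>z1\<in>W1. \<forall>w1\<in>W1. \<forall>x2\<in>W2. \<forall>y2\<in>W2. \<forall>z2\<in>W2. \<forall>w2\<in>W2.
         T (x1 + x2) (y1 + y2) (z1 + z2) (w1 + w2) = T1 x1 y1 z1 w1 + T2 x2 y2 z2 w2))"

text \<open>Basis/coordinate labels: U_i = i (0..k), V_i = k+1+i (0..k), S_i = 2k+1+i (1..k).
 The index type 'n is labelled by a bijection idx onto {..<3k+2}.\<close>

definition Gm :: "nat \<Rightarrow> (nat \<Rightarrow> real) \<Rightarrow> nat \<Rightarrow> nat \<Rightarrow> real" where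
  "Gm k eps a b =
    (if (a \<le> k \<and> b = a + k + 1) \<or> (b \<le> k \<and> a = b + k + 1) then 1
     else if a = b \<and> 2*k+2 \<le> a \<and> a \<le> 3*k+1 then eps (a - (2*k+1)) else 0)"

definition ind4 :: "nat \<Rightarrow> nat \<Rightarrow> nat \<Rightarrow> nat \<Rightarrow> nat \<Rightarrow> nat \<Rightarrow> nat \<Rightarrow> nat \<Rightarrow> real" where
  "ind4 a b c d a' b' c' d' = (if a = a' \<and> b = b' \<and> c = c' \<and> d = d' then 1 else 0)"

text \<open>Components of R: orbit of R(U_0,U_i,U_i,S_i)=1 under the curvature symmetries.\<close>
definition Rn :: "nat \<Rightarrow> nat \<Rightarrow> nat \<Rightarrow> nat \<Rightarrow> nat \<Rightarrow> real" where
  "Rn k a b c d = (\<Sum>i=1..k. let A = 0; B = i; C = 2*k+1+i in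
       ind4 a b c d A B B C - ind4 a b c d B A B C - ind4 a b c d A B C B + ind4 a b c d B A C B
     + ind4 a b c d B C A B - ind4 a b c d C B A B - ind4 a b c d B C B A + ind4 a b c d C B B A)"

definition model_ip :: "nat \<Rightarrow> ('n::finite \<Rightarrow> nat) \<Rightarrow> (nat \<Rightarrow> real) \<Rightarrow> real^'n \<Rightarrow> real^'n \<Rightarrow> real" where
  "model_ip k idx eps x y = (\<Sum>p\<in>UNIV. \<Sum>q\<in>UNIV. x$p * Gm k eps (idx p) (idx q) * y$q)"

definition model_R :: "nat \<Rightarrow> ('n::finite \<Rightarrow> nat) \<Rightarrow> real^'n \<Rightarrow> real^'n \<Rightarrow> real^'n \<Rightarrow> real^'n \<Rightarrow> real" where
  "model_R k idx x y z w = (\<Sum>p\<in>UNIV. \<Sum>q\<in>UNIV. \<Sum>r\<in>UNIV. \<Sum>s\<in>UNIV.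
      Rn k (idx p) (idx q) (idx r) (idx s) * x$p * y$q * z$r * w$s)"

definition coord :: "('n::finite \<Rightarrow> nat) \<Rightarrow> real^'n \<Rightarrow> nat \<Rightarrow> real" where
  "coord idx x m = x $ (THE p. idx p = m)"

definition gF :: "nat \<Rightarrow> ('n::finite \<Rightarrow> nat) \<Rightarrow> (nat \<Rightarrow> real) \<Rightarrow> (nat \<Rightarrow> real \<Rightarrow> real)
                   \<Rightarrow> real^'n \<Rightarrow> real^'n^'n" where
  "gF k idx eps F x = (\<chi> p q. let a = idx p; b = idx q in
     if (a \<le> k \<and> b = a + k + 1) \<or> (b \<le> k \<and> a = b + k + 1) then 1
     else if a = b \<and> 2*k+2 \<le> a \<and> a \<le> 3*k+1 then eps (a - (2*k+1))
     else if a = 0 \<and> 1 \<le> b \<and> b \<le> k then 2 * F b (coord idx x b) * coord idx x (2*k+1+b)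
     else if b = 0 \<and> 1 \<le> a \<and> a \<le> k then 2 * F a (coord idx x a) * coord idx x (2*k+1+a)
     else if a = b \<and> 1 \<le> a \<and> a \<le> k then - 2 * coord idx x 0 * coord idx x (2*k+1+a)
     else 0)"

end

theory Submission
  imports Defs
begin

(*
  Both statements reduce to one rigidity fact of linear algebra.  A splitting of the model, or a
  local product structure of M_F near a point, yields a linear map P with P o P = P, P <> 0, P <> id,
  which is self-adjoint for the metric and commutes with the curvature operators R(x, y).  For the
  model, P is the projection onto the first summand.  For the manifold, P is the projection onto the
  tangent spaces of the first factor; it is parallel, dP = [P, Gamma], and differentiating once more
  and using the symmetry of second derivatives shows that it commutes with curvature.

  In coordinates, R(U_i, S_i) acts as the 2-form z_U0 w_Ui - z_Ui w_U0 and R(U_0, U_i) as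
  z_Ui w_Si - z_Si w_Ui; for M_F the same holds up to the factor 1 + f_i' and an extra multiple
  of the first form, which is why f_i' + 1 <> 0 is needed.  A map commuting with these 2-forms acts
  by one scalar lambda on all U- and S-coordinates.  Since V_a is paired with U_a and with nothing
  else, self-adjointness then gives P = lambda id, and P o P = P forces lambda = 0 or lambda = 1.
*)

section \<open>Idempotents commuting with elementary 2-forms\<close>

lemma bilin_add_left: "bilin G (x + y) z = bilin G x z + bilin G y z"
  unfolding bilin_def by (simp add: distrib_right sum.distrib)

lemma bilin_add_right: "bilin G x (y + z) = bilin G x y + bilin G x z"
  unfolding bilin_def by (simp add: distrib_left sum.distrib)

lemma bilin_diff_left: "bilin G (x - y) z = bilin G x z - bilin G y z"
  unfolding bilin_def by (simp add: left_diff_distrib sum_subtractf)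

lemma bilin_diff_right: "bilin G x (y - z) = bilin G x y - bilin G x z"
  unfolding bilin_def by (simp add: right_diff_distrib sum_subtractf)

lemma bilin_scaleR_left: "bilin G (c *\<^sub>R x) y = c * bilin G x y"
  unfolding bilin_def by (simp add: sum_distrib_left mult.assoc)

lemma bilin_scaleR_right: "bilin G x (c *\<^sub>R y) = c * bilin G x y"
  unfolding bilin_def by (simp add: sum_distrib_left algebra_simps)

lemma bilin_zero_left: "bilin G 0 w = 0"
  and bilin_zero_right: "bilin G v 0 = 0"
  by (simp_all add: bilin_def)

lemma bilin_sum_left: "bilin G (\<Sum>d\<in>S. f d) w = (\<Sum>d\<in>S. bilin G (f d) w)"
  by (induction S rule: infinite_finite_induct) (simp_all add: bilin_add_left bilin_zero_left)

lemma bilin_sum_right: "bilin G v (\<Sum>d\<in>S. f d) = (\<Sum>d\<in>S. bilin G v (f d))"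
  by (induction S rule: infinite_finite_induct) (simp_all add: bilin_add_right bilin_zero_right)

lemma bilin_commute: "(\<And>p q. G $ p $ q = G $ q $ p) \<Longrightarrow> bilin G x y = bilin G y x"
  unfolding bilin_def by (subst sum.swap) (simp add: mult.commute mult.left_commute)

lemma bilinear_bilin: "bilinear (bilin G)"
  unfolding bilinear_def
  by (auto intro!: linearI simp: bilin_add_left bilin_add_right bilin_scaleR_left bilin_scaleR_right)

lemma bilin_matrix_vector: "bilin G (M *v z) w = (\<Sum>r\<in>UNIV. \<Sum>q\<in>UNIV. z $ r * w $ q * (\<Sum>p\<in>UNIV. M $ p $ r * G $ p $ q))"
proof -
  have "bilin G (M *v z) w = (\<Sum>p\<in>UNIV. \<Sum>q\<in>UNIV. \<Sum>r\<in>UNIV. z $ r * w $ q * (M $ p $ r * G $ p $ q))"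
    unfolding bilin_def by (simp add: matrix_vector_mult_def sum_distrib_left sum_distrib_right mult_ac)
  also have "\<dots> = (\<Sum>r\<in>UNIV. \<Sum>q\<in>UNIV. \<Sum>p\<in>UNIV. z $ r * w $ q * (M $ p $ r * G $ p $ q))"
    by (subst sum.swap, subst (2) sum.swap) (rule sum.swap)
  finally show ?thesis by (simp add: sum_distrib_left)
qed

lemma double_sum_lincomb:
  "(\<Sum>r\<in>A. \<Sum>q\<in>B. z r * w q * ((a::real) * X r q + b * Y r q))
     = a * (\<Sum>r\<in>A. \<Sum>q\<in>B. X r q * z r * w q) + b * (\<Sum>r\<in>A. \<Sum>q\<in>B. Y r q * z r * w q)"
proof -
  have "(\<Sum>r\<in>A. \<Sum>q\<in>B. z r * w q * (a * X r q + b * Y r q))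
     = (\<Sum>r\<in>A. \<Sum>q\<in>B. a * (X r q * z r * w q) + b * (Y r q * z r * w q))"
    by (intro sum.cong refl) (simp add: algebra_simps)
  then show ?thesis by (simp add: sum.distrib sum_distrib_left)
qed

lemma selfadjoint_commuting_transfer:
  assumes comm: "P ** M = M ** P" and selfadj: "\<And>u v. bilin G (P *v u) v = bilin G u (P *v v)"
  shows "bilin G (M *v (P *v z)) w = bilin G (M *v z) (P *v w)"
proof -
  have "M *v (P *v z) = P *v (M *v z)" by (simp add: matrix_vector_mul_assoc comm)
  then show ?thesis using selfadj by simp
qed

lemma vec_eq_sum_axis: "x = (\<Sum>p\<in>UNIV. (x $ p) *\<^sub>R axis p (1::real))"
  using basis_expansion[of x] by (simp add: scalar_mult_eq_scaleR)

lemma linear_eq_sum_axis: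
  assumes "linear f"
  shows "f x = (\<Sum>p\<in>UNIV. (x $ p) *\<^sub>R f (axis p (1::real)))"
  by (subst vec_eq_sum_axis) (simp add: linear_sum[OF assms] linear_cmul[OF assms])

lemma axis_nth_eq: "axis i (1::real) $ j = (if j = i then 1 else 0)"
  by (simp add: axis_def)

definition wedge :: "'n \<Rightarrow> 'n \<Rightarrow> real^'n \<Rightarrow> real^'n \<Rightarrow> real" where
  "wedge p q z w = z $ p * w $ q - z $ q * w $ p"

lemma wedge_symmetric_rows:
  fixes P :: "real^'n \<Rightarrow> real^'n"
  assumes pq: "p \<noteq> q" and sym: "\<And>z w. wedge p q (P z) w = wedge p q z (P w)"
  shows "P z $ p = P (axis p 1) $ p * z $ p" and "P z $ q = P (axis p 1) $ p * z $ q"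
proof -
  have row_p: "P z $ p = z $ p * P (axis q 1) $ q - z $ q * P (axis q 1) $ p" for z
    using sym[of z "axis q 1"] pq by (simp add: wedge_def axis_nth_eq)
  have row_q: "P z $ q = z $ q * P (axis p 1) $ p - z $ p * P (axis p 1) $ q" for z
    using sym[of z "axis p 1"] pq by (simp add: wedge_def axis_nth_eq)
  have "P (axis q 1) $ p = 0" using row_p[of "axis q 1"] pq by (simp add: axis_nth_eq)
  moreover have "P (axis p 1) $ q = 0" using row_q[of "axis p 1"] pq by (simp add: axis_nth_eq)
  moreover have "P (axis p 1) $ p = P (axis q 1) $ q" using row_p[of "axis p 1"] pq
    by (simp add: axis_nth_eq)
  ultimately show "P z $ p = P (axis p 1) $ p * z $ p" "P z $ q = P (axis p 1) $ p * z $ q"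
    using row_p[of z] row_q[of z] by (simp_all add: mult.commute)
qed

lemma bilin_supported_left:
  fixes G :: "real^'n^'n" and u v :: "'a \<Rightarrow> 'n"
  assumes rows: "\<And>a. a \<in> A \<Longrightarrow> G $ v a = axis (u a) 1" and inj: "inj_on v A"
    and supp: "\<And>p. p \<notin> v ` A \<Longrightarrow> z $ p = 0"
  shows "bilin G z y = (\<Sum>a\<in>A. z $ v a * y $ u a)"
proof -
  have "bilin G z y = (\<Sum>p\<in>v ` A. \<Sum>q\<in>UNIV. z $ p * G $ p $ q * y $ q)"
    unfolding bilin_def by (rule sum.mono_neutral_right) (use supp in auto)
  also have "\<dots> = (\<Sum>a\<in>A. \<Sum>q\<in>UNIV. z $ v a * G $ v a $ q * y $ q)"
    by (rule sum.reindex[OF inj, unfolded o_def])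
  also have "\<dots> = (\<Sum>a\<in>A. z $ v a * y $ u a)"
    by (rule sum.cong) (simp_all add: rows axis_nth_eq if_distrib[of "\<lambda>x. _ * x * _"] cong: if_cong)
  finally show ?thesis .
qed

lemma selfadjoint_supported_zero:
  fixes Q :: "real^'n \<Rightarrow> real^'n" and G :: "real^'n^'n" and u v :: "'a \<Rightarrow> 'n"
  assumes selfadj: "\<And>x y. bilin G (Q x) y = bilin G x (Q y)"
    and Gsym: "\<And>p q. G $ p $ q = G $ q $ p"
    and rows: "\<And>a. a \<in> A \<Longrightarrow> G $ v a = axis (u a) 1"
    and inj: "inj_on u A" "inj_on v A"
    and supp: "\<And>x p. p \<notin> v ` A \<Longrightarrow> Q x $ p = 0"
    and x: "\<And>a. a \<in> A \<Longrightarrow> x $ u a = 0"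
  shows "Q x = 0"
proof -
  have finA: "finite A" using finite_imageD[OF _ inj(2)] by simp
  have v_zero: "Q x $ v b = 0" if b: "b \<in> A" for b
  proof -
    have "(\<Sum>a\<in>A. Q x $ v a * axis (u b) 1 $ u a) = (\<Sum>a\<in>A. if a = b then Q x $ v a else 0)"
      by (rule sum.cong) (use b inj_onD[OF inj(1)] in \<open>auto simp: axis_nth_eq\<close>)
    also have "\<dots> = Q x $ v b" using b finA by simp
    finally have "Q x $ v b = bilin G (Q x) (axis (u b) 1)"
      by (simp add: bilin_supported_left[OF rows inj(2) supp])
    also have "\<dots> = bilin G (Q (axis (u b) 1)) x"
      by (simp add: selfadj bilin_commute[OF Gsym])
    also have "\<dots> = 0"
      by (simp add: bilin_supported_left[OF rows inj(2) supp] x)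
    finally show ?thesis .
  qed
  have "Q x $ p = 0" for p
    using supp[of p x] v_zero by (cases "p \<in> v ` A") auto
  then show ?thesis by (simp add: vec_eq_iff)
qed

lemma idempotent_selfadjoint_trivial:
  fixes P :: "real^'n \<Rightarrow> real^'n" and G :: "real^'n^'n" and u v :: "'a \<Rightarrow> 'n"
  assumes lin: "linear P" and idem: "\<And>x. P (P x) = P x"
    and selfadj: "\<And>x y. bilin G (P x) y = bilin G x (P y)"
    and Gsym: "\<And>p q. G $ p $ q = G $ q $ p"
    and rows: "\<And>a. a \<in> A \<Longrightarrow> G $ v a = axis (u a) 1"
    and inj: "inj_on u A" "inj_on v A" and disj: "\<And>a b. a \<in> A \<Longrightarrow> b \<in> A \<Longrightarrow> u a \<noteq> v b"
    and scalar: "\<And>x p. p \<notin> v ` A \<Longrightarrow> P x $ p = lam * x $ p"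
  shows "P = id \<or> P = (\<lambda>x. 0)"
proof -
  define Q where "Q x = P x - lam *\<^sub>R x" for x
  have Q_zero: "Q x = 0" if "\<And>a. a \<in> A \<Longrightarrow> x $ u a = 0" for x
  proof (rule selfadjoint_supported_zero[OF _ Gsym rows inj _ that])
    show "bilin G (Q x) y = bilin G x (Q y)" for x y
      by (simp add: Q_def bilin_diff_left bilin_diff_right bilin_scaleR_left bilin_scaleR_right selfadj)
    show "Q x $ p = 0" if "p \<notin> v ` A" for x p
      using scalar[OF that] by (simp add: Q_def)
  qed
  have Q_u: "Q (axis (u a) 1) = 0" if a: "a \<in> A" for a
  proof -
    define e :: "real^'n" where "e = axis (u a) 1"
    define w where "w = Q e"
    have w_u: "w $ u b = 0" if "b \<in> A" for b
      using scalar[of "u b" e] disj[OF that] by (auto simp: w_def Q_def)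
    have Pe: "P e = lam *\<^sub>R e + w" by (simp add: w_def Q_def)
    have "P (P e) = lam *\<^sub>R (lam *\<^sub>R e + w) + lam *\<^sub>R w"
      using Q_zero[OF w_u] by (simp add: Pe linear_add[OF lin] linear_cmul[OF lin] Q_def)
    then have eq: "(lam * lam) *\<^sub>R e + lam *\<^sub>R w + lam *\<^sub>R w = lam *\<^sub>R e + w"
      using idem[of e] Pe by (simp add: scaleR_add_right add.assoc)
    have "lam * lam = lam"
      using arg_cong[OF eq, of "\<lambda>x. x $ u a"] w_u[OF a] by (simp add: e_def)
    then have "lam = 0 \<or> lam = 1" by auto
    then have "w = 0" using eq by auto
    then show ?thesis by (simp add: w_def e_def)
  qed
  have "Q (axis r 1) = 0" for r
  proof (cases "r \<in> u ` A")
    case True then show ?thesis using Q_u by auto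
  next
    case False then show ?thesis by (intro Q_zero) (auto simp: axis_nth_eq)
  qed
  moreover have "linear Q" unfolding Q_def[abs_def] by (intro linear_compose_sub lin linear_scaleR)
  ultimately have Pi_scalar: "P x = lam *\<^sub>R x" for x
    using linear_eq_sum_axis[of Q x] by (simp add: Q_def)
  have "lam * lam = lam"
  proof -
    fix r :: 'n
    show ?thesis using arg_cong[OF idem[of "axis r 1"], of "\<lambda>x. x $ r"] by (simp add: Pi_scalar)
  qed
  then have "lam = 0 \<or> lam = 1" by auto
  then show ?thesis using Pi_scalar by (auto simp: fun_eq_iff)
qed

definition coord_index :: "('n \<Rightarrow> nat) \<Rightarrow> nat \<Rightarrow> 'n" where
  "coord_index idx m = (THE p. idx p = m)"

lemma coord_eq_nth: "coord idx x m = x $ coord_index idx m"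
  by (simp add: coord_def coord_index_def)

lemma label_cases:
  fixes m k :: nat
  assumes "m < 3*k+2"
  obtains (U) "m \<le> k" | (V) a where "a \<le> k" "m = k+1+a" | (S) i where "1 \<le> i" "i \<le> k" "m = 2*k+1+i"
proof -
  consider "m \<le> k" | "k < m \<and> m \<le> 2*k+1" | "2*k+1 < m" by linarith
  then show ?thesis
  proof cases
    case 1 then show ?thesis using U by blast
  next
    case 2 then show ?thesis using V[of "m - (k+1)"] by auto
  next
    case 3 then show ?thesis using S[of "m - (2*k+1)"] assms by auto
  qed
qed

locale labelling =
  fixes k :: nat and idx :: "'n::finite \<Rightarrow> nat"
  assumes bij_idx: "bij_betw idx UNIV {..<3*k+2}"
begin

abbreviation ix :: "nat \<Rightarrow> 'n" where "ix \<equiv> coord_index idx"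

lemma idx_less: "idx p < 3*k+2"
  using bij_idx by (auto simp: bij_betw_def)

lemma idx_inject: "idx p = idx q \<longleftrightarrow> p = q"
  using bij_idx by (auto simp: bij_betw_def inj_def)

lemma ix_idx [simp]: "ix (idx p) = p"
  unfolding coord_index_def by (rule the_equality) (use idx_inject in auto)

lemma idx_ix [simp]: "m < 3*k+2 \<Longrightarrow> idx (ix m) = m"
  using bij_idx by (metis bij_betw_def imageE lessThan_iff ix_idx)

lemma ix_inject: "m < 3*k+2 \<Longrightarrow> m' < 3*k+2 \<Longrightarrow> ix m = ix m' \<longleftrightarrow> m = m'"
  by (metis idx_ix)

lemma eq_ix_iff: "m < 3*k+2 \<Longrightarrow> p = ix m \<longleftrightarrow> idx p = m"
  by (metis idx_ix ix_idx)

lemma index_cases: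
  fixes p :: 'n
  obtains (U) a where "a \<le> k" "p = ix a"
    | (V) a where "a \<le> k" "p = ix (k+1+a)"
    | (S) i where "1 \<le> i" "i \<le> k" "p = ix (2*k+1+i)"
  using idx_less[of p] by (cases rule: label_cases) (metis ix_idx)+

lemma sum_single_label:
  assumes "m < 3*k+2" "\<And>p. idx p \<noteq> m \<Longrightarrow> f p = 0"
  shows "(\<Sum>p\<in>UNIV. f p) = f (ix m)"
proof -
  have "(\<Sum>p\<in>UNIV. f p) = (\<Sum>p\<in>UNIV. if p = ix m then f p else 0)"
    by (rule sum.cong) (use assms eq_ix_iff in auto)
  then show ?thesis by simp
qed

lemma idempotent_trivial_if_wedges_symmetric:
  fixes P :: "real^'n \<Rightarrow> real^'n" and G :: "real^'n^'n"
  assumes k: "k \<ge> 1"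
    and lin: "linear P" and idem: "\<And>x. P (P x) = P x"
    and selfadj: "\<And>x y. bilin G (P x) y = bilin G x (P y)"
    and Gsym: "\<And>p q. G $ p $ q = G $ q $ p"
    and G_V: "\<And>a. a \<le> k \<Longrightarrow> G $ ix (k+1+a) = axis (ix a) 1"
    and sym_0i: "\<And>i z w. 1 \<le> i \<Longrightarrow> i \<le> k \<Longrightarrow>
       wedge (ix 0) (ix i) (P z) w = wedge (ix 0) (ix i) z (P w)"
    and sym_iS: "\<And>i z w. 1 \<le> i \<Longrightarrow> i \<le> k \<Longrightarrow>
       wedge (ix i) (ix (2*k+1+i)) (P z) w = wedge (ix i) (ix (2*k+1+i)) z (P w)"
  shows "P = id \<or> P = (\<lambda>x. 0)"
proof (rule idempotent_selfadjoint_trivial[OF lin idem selfadj Gsym])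
  define lam where "lam = P (axis (ix 0) 1) $ ix 0"
  have ne: "ix 0 \<noteq> ix i" "ix i \<noteq> ix (2*k+1+i)" if "1 \<le> i" "i \<le> k" for i
    using that by (simp_all add: ix_inject)
  have row_0i: "P z $ ix 0 = lam * z $ ix 0" "P z $ ix i = lam * z $ ix i"
    if "1 \<le> i" "i \<le> k" for i z
    using wedge_symmetric_rows[OF ne(1) sym_0i, OF that that] unfolding lam_def by blast+
  have row_S: "P z $ ix (2*k+1+i) = lam * z $ ix (2*k+1+i)" if i: "1 \<le> i" "i \<le> k" for i z
    using wedge_symmetric_rows(2)[OF ne(2) sym_iS, OF i i] row_0i(2)[OF i, of "axis (ix i) 1"]
    by simp
  show "P x $ p = lam * x $ p" if "p \<notin> (\<lambda>a. ix (k+1+a)) ` {..k}" for x p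
  proof (cases p rule: index_cases)
    case (U a) then show ?thesis using row_0i[of 1] row_0i[of a] k by (cases "a = 0") auto
  next
    case (V a) then show ?thesis using that by auto
  next
    case (S i) then show ?thesis using row_S by simp
  qed
  show "inj_on ix {..k}" "inj_on (\<lambda>a. ix (k+1+a)) {..k}"
    by (auto intro!: inj_onI simp: ix_inject)
  show "ix a \<noteq> ix (k+1+b)" if "a \<in> {..k}" "b \<in> {..k}" for a b
    using that by (simp add: ix_inject)
qed (use G_V in auto)

end

section \<open>The model is indecomposable\<close>

lemma Rn_U0_Ui:
  assumes "1 \<le> i" "i \<le> k"
  shows "Rn k 0 i c d = (if c = i \<and> d = 2*k+1+i then 1 else 0) - (if c = 2*k+1+i \<and> d = i then 1 else 0)"
proof -
  have "Rn k 0 i c d = (\<Sum>j=1..k. if j = i then (if c = i \<and> d = 2*k+1+i then 1 else 0)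
                                   - (if c = 2*k+1+i \<and> d = i then 1 else 0) else 0)"
    unfolding Rn_def Let_def by (rule sum.cong[OF refl]) (auto simp: ind4_def)
  then show ?thesis using assms by simp
qed

lemma Rn_Ui_Si:
  assumes "1 \<le> i" "i \<le> k"
  shows "Rn k i (2*k+1+i) c d = (if c = 0 \<and> d = i then 1 else 0) - (if c = i \<and> d = 0 then 1 else 0)"
proof -
  have "Rn k i (2*k+1+i) c d = (\<Sum>j=1..k. if j = i then (if c = 0 \<and> d = i then 1 else 0)
                                            - (if c = i \<and> d = 0 then 1 else 0) else 0)"
    unfolding Rn_def Let_def by (rule sum.cong[OF refl]) (auto simp: ind4_def)
  then show ?thesis using assms by simp
qed

lemma complement_projection:
  fixes W1 W2 :: "'v::real_vector set"
  assumes W: "subspace W1" "subspace W2" "W1 \<inter> W2 = {0}"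
    and span: "{x + y | x y. x \<in> W1 \<and> y \<in> W2} = UNIV"
  obtains P where "\<And>x. P x \<in> W1" "\<And>x. x - P x \<in> W2"
    "\<And>x x1. x1 \<in> W1 \<Longrightarrow> x - x1 \<in> W2 \<Longrightarrow> P x = x1"
proof -
  have uniq: "x1 = x1'" if "x1 \<in> W1" "x - x1 \<in> W2" "x1' \<in> W1" "x - x1' \<in> W2" for x x1 x1'
  proof -
    have "x1 - x1' \<in> W1" using that W(1) by (simp add: subspace_diff)
    moreover have "(x - x1') - (x - x1) \<in> W2" by (rule subspace_diff[OF W(2)]) (use that in auto)
    ultimately have "x1 - x1' \<in> W1 \<inter> W2" by simp
    then show ?thesis using W(3) by simp
  qed
  have "\<exists>x1. x1 \<in> W1 \<and> x - x1 \<in> W2" for x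
  proof -
    obtain a b where "x = a + b" "a \<in> W1" "b \<in> W2" using span by blast
    then show ?thesis by (intro exI[of _ a]) simp
  qed
  then obtain P where "\<And>x. P x \<in> W1 \<and> x - P x \<in> W2" by metis
  then show ?thesis using that uniq by blast
qed

lemma complement_projection_linear:
  fixes W1 W2 :: "'v::real_vector set"
  assumes W: "subspace W1" "subspace W2"
    and P1: "\<And>x. P x \<in> W1" and P2: "\<And>x. x - P x \<in> W2"
    and P_eq: "\<And>x x1. x1 \<in> W1 \<Longrightarrow> x - x1 \<in> W2 \<Longrightarrow> P x = x1"
  shows "linear P"
proof (rule linearI)
  show "P (x + y) = P x + P y" for x y
  proof (rule P_eq)
    show "P x + P y \<in> W1" by (rule subspace_add[OF W(1) P1 P1])
    have "(x - P x) + (y - P y) \<in> W2" by (rule subspace_add[OF W(2) P2 P2])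
    then show "x + y - (P x + P y) \<in> W2" by (simp add: algebra_simps)
  qed
  show "P (c *\<^sub>R x) = c *\<^sub>R P x" for c x
  proof (rule P_eq)
    show "c *\<^sub>R P x \<in> W1" by (rule subspace_scale[OF W(1) P1])
    show "c *\<^sub>R x - c *\<^sub>R P x \<in> W2"
      using subspace_scale[OF W(2) P2] by (simp add: scaleR_diff_right)
  qed
qed

lemma split_tensor_commutes_with_projection:
  fixes T :: "'v::real_vector \<Rightarrow> 'v \<Rightarrow> 'v \<Rightarrow> 'v \<Rightarrow> real"
  assumes T: "\<And>x1 y1 z1 w1 x2 y2 z2 w2. x1 \<in> W1 \<Longrightarrow> y1 \<in> W1 \<Longrightarrow> z1 \<in> W1 \<Longrightarrow> w1 \<in> W1 \<Longrightarrow>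
       x2 \<in> W2 \<Longrightarrow> y2 \<in> W2 \<Longrightarrow> z2 \<in> W2 \<Longrightarrow> w2 \<in> W2 \<Longrightarrow>
       T (x1 + x2) (y1 + y2) (z1 + z2) (w1 + w2) = T' x1 y1 z1 w1 + T'' x2 y2 z2 w2"
    and T_zero: "\<And>x y w. T x y 0 w = 0" "\<And>x y z. T x y z 0 = 0"
    and zero: "0 \<in> W1" "0 \<in> W2"
    and P1: "\<And>x. P x \<in> W1" and P2: "\<And>x. x - P x \<in> W2" and idem: "\<And>x. P (P x) = P x"
  shows "T x y (P z) w = T x y z (P w)"
proof -
  have split: "T x y z w = T (P x) (P y) (P z) (P w)
      + T'' (x - P x) (y - P y) (z - P z) (w - P w) - T'' 0 0 0 0" for x y z w
    using T[OF P1[of x] P1[of y] P1[of z] P1[of w] P2[of x] P2[of y] P2[of z] P2[of w]]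
      T[OF P1[of x] P1[of y] P1[of z] P1[of w] zero(2) zero(2) zero(2) zero(2)] by simp
  have "T'' a b 0 c = T'' 0 0 0 0" "T'' a b c 0 = T'' 0 0 0 0" if "a \<in> W2" "b \<in> W2" "c \<in> W2" for a b c
    using T[OF zero(1) zero(1) zero(1) zero(1) that(1,2) zero(2) that(3)]
      T[OF zero(1) zero(1) zero(1) zero(1) that(1,2,3) zero(2)]
      T[OF zero(1) zero(1) zero(1) zero(1) zero(2) zero(2) zero(2) zero(2)] T_zero by simp_all
  then show ?thesis using split[of x y "P z" w] split[of x y z "P w"] idem P2 by simp
qed

lemma decomposable_model_projection:
  fixes ip :: "'v::real_vector \<Rightarrow> 'v \<Rightarrow> real" and T :: "'v \<Rightarrow> 'v \<Rightarrow> 'v \<Rightarrow> 'v \<Rightarrow> real"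
  assumes dec: "decomposable_model ip T"
    and ip: "bilinear ip" "\<And>x y. ip x y = ip y x"
    and T_zero: "\<And>x y w. T x y 0 w = 0" "\<And>x y z. T x y z 0 = 0"
  obtains P where "linear P" "\<And>x. P (P x) = P x" "P \<noteq> id" "P \<noteq> (\<lambda>x. 0)"
    "\<And>x y. ip (P x) y = ip x (P y)" "\<And>x y z w. T x y (P z) w = T x y z (P w)"
proof -
  obtain W1 W2 T1 T2 where
    W: "subspace W1" "subspace W2" "W1 \<noteq> {0}" "W2 \<noteq> {0}" "W1 \<inter> W2 = {0}"
    and span: "{x + y | x y. x \<in> W1 \<and> y \<in> W2} = UNIV"
    and orth: "\<forall>x\<in>W1. \<forall>y\<in>W2. ip x y = 0"
    and T: "\<forall>x1\<in>W1. \<forall>y1\<in>W1. \<forall>z1\<in>W1. \<forall>w1\<in>W1. \<forall>x2\<in>W2. \<forall>y2\<in>W2. \<forall>z2\<in>W2. \<forall>w2\<in>W2.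
         T (x1 + x2) (y1 + y2) (z1 + z2) (w1 + w2) = T1 x1 y1 z1 w1 + T2 x2 y2 z2 w2"
    using dec unfolding decomposable_model_def by blast
  obtain P where P1: "\<And>x. P x \<in> W1" and P2: "\<And>x. x - P x \<in> W2"
    and P_eq: "\<And>x x1. x1 \<in> W1 \<Longrightarrow> x - x1 \<in> W2 \<Longrightarrow> P x = x1"
    using complement_projection[OF W(1,2,5) span] by blast
  have zero: "0 \<in> W1" "0 \<in> W2" using W(1,2) subspace_0 by auto
  have idem: "P (P x) = P x" for x by (rule P_eq[OF P1]) (simp add: zero)
  show ?thesis
  proof
    show "linear P" by (rule complement_projection_linear[OF W(1,2) P1 P2 P_eq])
    show "P (P x) = P x" for x by (rule idem)
    show "P \<noteq> id"
    proof
      assume "P = id"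
      then have "y = 0" if "y \<in> W2" for y using P_eq[of 0 y] that zero by auto
      then show False using W(4) zero by blast
    qed
    show "P \<noteq> (\<lambda>x. 0)"
    proof
      assume "P = (\<lambda>x. 0)"
      then have "x = 0" if "x \<in> W1" for x using P_eq[of x x] that zero by auto
      then show False using W(3) zero by blast
    qed
    show "ip (P x) y = ip x (P y)" for x y
    proof -
      have lin: "linear (ip a)" for a using ip(1) unfolding bilinear_def by auto
      have "ip (P x) y = ip (P x) (P y) + ip (P x) (y - P y)"
        by (simp add: linear_diff[OF lin])
      moreover have "ip x (P y) = ip (P x) (P y) + ip (P y) (x - P x)"
        by (simp add: linear_diff[OF lin] ip(2))
      ultimately show ?thesis using orth P1 P2 by simp
    qed
    show "T x y (P z) w = T x y z (P w)" for x y z w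
      by (rule split_tensor_commutes_with_projection[where T'=T1 and T''=T2, OF T[rule_format] T_zero zero P1 P2 idem])
  qed
qed

context labelling
begin

lemma sum_label_wedge:
  assumes "m1 < 3*k+2" "m2 < 3*k+2"
  shows "(\<Sum>r\<in>UNIV. \<Sum>s\<in>UNIV. ((if idx r = m1 \<and> idx s = m2 then 1 else 0)
            - (if idx r = m2 \<and> idx s = m1 then 1 else 0)) * z $ r * w $ s) = wedge (ix m1) (ix m2) z w"
proof -
  have pair: "(\<Sum>r\<in>UNIV. \<Sum>s\<in>UNIV. (if idx r = m \<and> idx s = m' then 1 else 0) * z $ r * w $ s)
      = z $ ix m * w $ ix m'" if "m < 3*k+2" "m' < 3*k+2" for m m'
  proof -
    have "(\<Sum>r\<in>UNIV. \<Sum>s\<in>UNIV. (if idx r = m \<and> idx s = m' then 1 else 0) * z $ r * w $ s)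
        = (\<Sum>r\<in>UNIV. if r = ix m then (\<Sum>s\<in>UNIV. if s = ix m' then z $ r * w $ s else 0) else 0)"
      by (rule sum.cong[OF refl]) (auto simp: eq_ix_iff[OF that(1)] eq_ix_iff[OF that(2)] intro!: sum.cong)
    then show ?thesis by simp
  qed
  show ?thesis
    using pair[OF assms] pair[OF assms(2,1)]
    by (simp add: wedge_def left_diff_distrib sum_subtractf)
qed

lemma model_R_axis_axis:
  "model_R k idx (axis p 1) (axis q 1) z w
     = (\<Sum>r\<in>UNIV. \<Sum>s\<in>UNIV. Rn k (idx p) (idx q) (idx r) (idx s) * z $ r * w $ s)"
  (is "_ = ?X")
proof -
  have "(\<Sum>q'\<in>UNIV. \<Sum>r\<in>UNIV. \<Sum>s\<in>UNIV.
          Rn k (idx p') (idx q') (idx r) (idx s) * axis p 1 $ p' * axis q 1 $ q' * z $ r * w $ s)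
      = (\<Sum>q'\<in>UNIV. if q' = q then if p' = p then ?X else 0 else 0)" for p'
    by (rule sum.cong) (auto simp: axis_nth_eq)
  then show ?thesis unfolding model_R_def by simp
qed

lemma model_R_U0_Ui:
  assumes "1 \<le> i" "i \<le> k"
  shows "model_R k idx (axis (ix 0) 1) (axis (ix i) 1) z w = wedge (ix i) (ix (2*k+1+i)) z w"
proof -
  have l: "idx (ix 0) = 0" "idx (ix i) = i" using assms by (auto intro!: idx_ix)
  show ?thesis
    unfolding model_R_axis_axis l Rn_U0_Ui[OF assms] by (rule sum_label_wedge) (use assms in auto)
qed

lemma model_R_Ui_Si:
  assumes "1 \<le> i" "i \<le> k"
  shows "model_R k idx (axis (ix i) 1) (axis (ix (2*k+1+i)) 1) z w = wedge (ix 0) (ix i) z w"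
proof -
  have l: "idx (ix i) = i" "idx (ix (2*k+1+i)) = 2*k+1+i" using assms by (auto intro!: idx_ix)
  show ?thesis
    unfolding model_R_axis_axis l Rn_Ui_Si[OF assms] by (rule sum_label_wedge) (use assms in auto)
qed

theorem model_indecomposable:
  assumes k: "k \<ge> 1"
  shows "\<not> decomposable_model (model_ip k idx eps) (model_R k idx)"
proof
  define G :: "real^'n^'n" where "G = (\<chi> p q. Gm k eps (idx p) (idx q))"
  have ip: "model_ip k idx eps = bilin G" by (simp add: fun_eq_iff model_ip_def bilin_def G_def)
  have Gsym: "G $ p $ q = G $ q $ p" for p q by (auto simp: G_def Gm_def)
  assume "decomposable_model (model_ip k idx eps) (model_R k idx)"
  then obtain P where P: "linear P" "\<And>x. P (P x) = P x" "P \<noteq> id" "P \<noteq> (\<lambda>x. 0)"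
    "\<And>x y. bilin G (P x) y = bilin G x (P y)"
    "\<And>x y z w. model_R k idx x y (P z) w = model_R k idx x y z (P w)"
    by (rule decomposable_model_projection) (auto simp: ip bilinear_bilin bilin_commute[OF Gsym] model_R_def)
  have "P = id \<or> P = (\<lambda>x. 0)"
  proof (rule idempotent_trivial_if_wedges_symmetric[OF k P(1,2,5) Gsym])
    show "G $ ix (k+1+a) = axis (ix a) 1" if "a \<le> k" for a
      using that by (auto simp: vec_eq_iff G_def Gm_def axis_nth_eq eq_ix_iff)
    show "wedge (ix 0) (ix i) (P z) w = wedge (ix 0) (ix i) z (P w)" if "1 \<le> i" "i \<le> k" for i z w
      using P(6) by (simp flip: model_R_Ui_Si[OF that])
    show "wedge (ix i) (ix (2*k+1+i)) (P z) w = wedge (ix i) (ix (2*k+1+i)) z (P w)"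
      if "1 \<le> i" "i \<le> k" for i z w
      using P(6) by (simp only: flip: model_R_U0_Ui[OF that])
  qed
  then show False using P(3,4) by blast
qed

end

section \<open>Symmetry of second derivatives and smoothness\<close>

lemma second_difference_mvt:
  fixes f :: "'a::real_normed_vector \<Rightarrow> real"
  assumes Df: "\<forall>y\<in>S. (f has_derivative Df y) (at y)" and t: "0 < t"
    and inS: "\<And>s. 0 \<le> s \<Longrightarrow> s \<le> t \<Longrightarrow> x + s *\<^sub>R u \<in> S \<and> x + s *\<^sub>R u + t *\<^sub>R v \<in> S"
  obtains s where "0 < s" "s < t"
    "f (x + t *\<^sub>R u + t *\<^sub>R v) - f (x + t *\<^sub>R u) - f (x + t *\<^sub>R v) + f x
       = t * (Df (x + s *\<^sub>R u + t *\<^sub>R v) u - Df (x + s *\<^sub>R u) u)"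
proof -
  define G where "G s = f (x + s *\<^sub>R u + t *\<^sub>R v) - f (x + s *\<^sub>R u)" for s
  define G' where "G' s = (\<lambda>h. h * (Df (x + s *\<^sub>R u + t *\<^sub>R v) u - Df (x + s *\<^sub>R u) u))" for s
  have along: "((\<lambda>s. f (x' + s *\<^sub>R u)) has_derivative (\<lambda>h. h * Df (x' + s *\<^sub>R u) u)) (at s within {0..t})"
    if "x' + s *\<^sub>R u \<in> S" for x' s
  proof -
    have "((\<lambda>s. f (x' + s *\<^sub>R u)) has_derivative (\<lambda>h. Df (x' + s *\<^sub>R u) (h *\<^sub>R u))) (at s within {0..t})"
      by (rule has_derivative_compose[where f="\<lambda>s. x' + s *\<^sub>R u", unfolded o_def])
         (use Df that in \<open>auto intro!: derivative_eq_intros\<close>)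
    moreover have "linear (Df (x' + s *\<^sub>R u))" using Df that has_derivative_linear by blast
    ultimately show ?thesis by (simp add: linear_cmul)
  qed
  have "(G has_derivative G' s) (at s within {0..t})" if "0 \<le> s" "s \<le> t" for s
    using has_derivative_diff[OF along[of "x + t *\<^sub>R v" s] along[of x s]] inS[OF that]
    unfolding G_def G'_def by (simp add: algebra_simps)
  then obtain s where "s \<in> {0<..<t}" "G t - G 0 = G' s (t - 0)"
    using mvt_simple[of 0 t G G'] t by auto
  then show ?thesis using that by (auto simp: G_def G'_def)
qed

lemma second_difference_estimate:
  fixes f :: "'a::real_normed_vector \<Rightarrow> real"
  assumes S: "ball x r \<subseteq> S"
    and Df: "\<forall>y\<in>S. (f has_derivative Df y) (at y)"
    and L: "linear L"
    and est: "\<forall>z. norm (z - x) < d \<longrightarrow> \<bar>Df z u - Df x u - L (z - x)\<bar> \<le> e * norm (z - x)"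
    and t: "0 < t" "t * (norm u + norm v) < d" "t * (norm u + norm v) < r"
    and e: "0 \<le> e"
  shows "\<bar>(f (x + t *\<^sub>R u + t *\<^sub>R v) - f (x + t *\<^sub>R u) - f (x + t *\<^sub>R v) + f x) - t^2 * L v\<bar>
           \<le> e * t^2 * (2 * norm u + norm v)"
proof -
  have near: "norm (s *\<^sub>R u + t' *\<^sub>R v) \<le> t * (norm u + norm v)"
    if "0 \<le> s" "s \<le> t" "0 \<le> t'" "t' \<le> t" for s t'
  proof -
    have "norm (s *\<^sub>R u + t' *\<^sub>R v) \<le> s * norm u + t' * norm v"
      using that by (metis abs_of_nonneg norm_scaleR norm_triangle_le order_refl)
    also have "\<dots> \<le> t * (norm u + norm v)"
      using that by (simp add: distrib_left add_mono mult_right_mono)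
    finally show ?thesis .
  qed
  have inS: "x + s *\<^sub>R u + t' *\<^sub>R v \<in> S" if "0 \<le> s" "s \<le> t" "0 \<le> t'" "t' \<le> t" for s t'
  proof -
    have "dist x (x + w) = norm w" for w by (simp add: dist_norm)
    then have "dist x (x + (s *\<^sub>R u + t' *\<^sub>R v)) < r" using near[OF that] t(3) by simp
    then show ?thesis using S by (auto simp: add.assoc)
  qed
  obtain s where s: "0 < s" "s < t"
    and mvt: "f (x + t *\<^sub>R u + t *\<^sub>R v) - f (x + t *\<^sub>R u) - f (x + t *\<^sub>R v) + f x
       = t * (Df (x + s *\<^sub>R u + t *\<^sub>R v) u - Df (x + s *\<^sub>R u) u)"
    using second_difference_mvt[OF Df t(1), of x u v] inS[of _ 0] inS[of _ t] t(1) by auto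
  define z1 where "z1 = x + s *\<^sub>R u + t *\<^sub>R v"
  define z2 where "z2 = x + s *\<^sub>R u"
  define err where "err z = Df z u - Df x u - L (z - x)" for z
  have n1: "norm (z1 - x) \<le> t * (norm u + norm v)"
    using near[of s t] s t(1) by (simp add: z1_def add.assoc)
  have n2: "norm (z2 - x) \<le> t * norm u"
    using s by (simp add: z2_def mult_right_mono)
  have "t * norm u \<le> t * (norm u + norm v)" using t(1) by (simp add: mult_left_mono)
  then have "norm (z1 - x) < d" "norm (z2 - x) < d" using n1 n2 t(2) by linarith+
  then have E1: "\<bar>err z1\<bar> \<le> e * (t * (norm u + norm v))"
    and E2: "\<bar>err z2\<bar> \<le> e * (t * norm u)"
    using est n1 n2 e unfolding err_def by (meson mult_left_mono order_trans)+
  have "L (z1 - x) - L (z2 - x) = t * L v"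
    unfolding z1_def z2_def using L by (simp add: linear_add linear_cmul)
  then have "t * (Df z1 u - Df z2 u) - t^2 * L v = t * (err z1 - err z2)"
    by (simp add: err_def power2_eq_square algebra_simps)
  then have "\<bar>t * (Df z1 u - Df z2 u) - t^2 * L v\<bar> = t * \<bar>err z1 - err z2\<bar>"
    using t(1) by (simp add: abs_mult)
  also have "\<dots> \<le> t * (e * (t * (norm u + norm v)) + e * (t * norm u))"
    using E1 E2 t(1) by (intro mult_left_mono) (auto simp: abs_le_iff)
  also have "\<dots> = e * t^2 * (2 * norm u + norm v)"
    by (simp add: power2_eq_square algebra_simps)
  finally show ?thesis using mvt by (simp add: z1_def z2_def)
qed

lemma second_derivative_symmetric:
  fixes f :: "'a::real_normed_vector \<Rightarrow> real"
  assumes S: "open S" "x \<in> S" and Df: "\<forall>y\<in>S. (f has_derivative Df y) (at y)"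
    and D1: "((\<lambda>y. Df y u) has_derivative L1) (at x)"
    and D2: "((\<lambda>y. Df y v) has_derivative L2) (at x)"
  shows "L1 v = L2 u"
proof (rule ccontr)
  assume "L1 v \<noteq> L2 u"
  define \<delta> where "\<delta> = \<bar>L1 v - L2 u\<bar>"
  define N where "N = norm u + norm v"
  define e where "e = \<delta> / (3 * N + 1)"
  have N: "N \<ge> 0" by (simp add: N_def)
  have e: "e > 0" using \<open>L1 v \<noteq> L2 u\<close> N by (simp add: e_def \<delta>_def add_nonneg_pos)
  have e_small: "3 * e * N < \<delta>"
  proof -
    have "e * (3 * N + 1) = \<delta>" using N by (simp add: e_def)
    then show ?thesis using e by (simp add: algebra_simps)
  qed
  obtain d1 where d1: "d1 > 0" "\<forall>z. norm (z - x) < d1 \<longrightarrow> \<bar>Df z u - Df x u - L1 (z - x)\<bar> \<le> e * norm (z - x)"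
    using D1 e unfolding has_derivative_at_alt real_norm_def by blast
  obtain d2 where d2: "d2 > 0" "\<forall>z. norm (z - x) < d2 \<longrightarrow> \<bar>Df z v - Df x v - L2 (z - x)\<bar> \<le> e * norm (z - x)"
    using D2 e unfolding has_derivative_at_alt real_norm_def by blast
  obtain r where r: "r > 0" "ball x r \<subseteq> S" using S open_contains_ball by blast
  define t where "t = min d1 (min d2 r) / (N + 1)"
  have t: "t > 0" using d1 d2 r N by (simp add: t_def)
  have "t * N < t * (N + 1)" using t by simp
  also have "\<dots> = min d1 (min d2 r)" using N by (simp add: t_def)
  finally have tN: "t * N < d1" "t * N < d2" "t * N < r" by auto
  have E1: "\<bar>(f (x + t *\<^sub>R u + t *\<^sub>R v) - f (x + t *\<^sub>R u) - f (x + t *\<^sub>R v) + f x) - t^2 * L1 v\<bar>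
           \<le> e * t^2 * (2 * norm u + norm v)"
    by (rule second_difference_estimate[OF r(2) Df _ d1(2) t])
       (use D1 has_derivative_linear tN e in \<open>auto simp: N_def\<close>)
  have E2: "\<bar>(f (x + t *\<^sub>R v + t *\<^sub>R u) - f (x + t *\<^sub>R v) - f (x + t *\<^sub>R u) + f x) - t^2 * L2 u\<bar>
           \<le> e * t^2 * (2 * norm v + norm u)"
    by (rule second_difference_estimate[OF r(2) Df _ d2(2) t])
       (use D2 has_derivative_linear tN e in \<open>auto simp: N_def add.commute\<close>)
  have swap: "x + t *\<^sub>R v + t *\<^sub>R u = x + t *\<^sub>R u + t *\<^sub>R v" by (simp add: algebra_simps)
  have "t^2 * \<delta> = \<bar>t^2 * L1 v - t^2 * L2 u\<bar>"
    by (simp add: \<delta>_def abs_mult right_diff_distrib[symmetric])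
  also have "\<dots> \<le> e * t^2 * (2 * norm u + norm v) + e * t^2 * (2 * norm v + norm u)"
    using E1 E2 unfolding swap by linarith
  also have "\<dots> = t^2 * (3 * e * N)" by (simp add: N_def algebra_simps)
  finally show False using e_small t by simp
qed

lemma has_derivative_matrix_nth:
  fixes A :: "'a::real_normed_vector \<Rightarrow> real^'n^'m"
  assumes "(A has_derivative DA) F"
  shows "((\<lambda>y. A y $ i $ j) has_derivative (\<lambda>h. DA h $ i $ j)) F"
proof -
  have "bounded_linear (\<lambda>M::real^'n^'m. M $ i $ j)"
    using bounded_linear_compose[OF bounded_linear_vec_nth bounded_linear_vec_nth] .
  then show ?thesis by (rule bounded_linear.has_derivative[OF _ assms])
qed

lemma has_derivative_vec_nth:
  fixes A :: "'a::real_normed_vector \<Rightarrow> real^'n"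
  assumes "(A has_derivative DA) F"
  shows "((\<lambda>y. A y $ i) has_derivative (\<lambda>h. DA h $ i)) F"
  using bounded_linear.has_derivative[OF bounded_linear_vec_nth assms] .

lemma has_derivative_matrixI:
  fixes A :: "'a::real_normed_vector \<Rightarrow> real^'n^'m"
  assumes "\<And>i j. ((\<lambda>y. A y $ i $ j) has_derivative (\<lambda>h. DA h $ i $ j)) (at x within S)"
  shows "(A has_derivative DA) (at x within S)"
  by (subst has_derivative_componentwise_within) (auto simp: Basis_vec_def inner_axis intro: assms)

lemma has_derivative_matrix_mult:
  fixes A B :: "'a::real_normed_vector \<Rightarrow> real^'n^'n"
  assumes "(A has_derivative DA) (at x within S)" "(B has_derivative DB) (at x within S)"
  shows "((\<lambda>y. A y ** B y) has_derivative (\<lambda>h. A x ** DB h + DA h ** B x)) (at x within S)"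
proof (rule has_derivative_matrixI)
  fix i j
  have "((\<lambda>y. \<Sum>k\<in>UNIV. A y $ i $ k * B y $ k $ j) has_derivative
         (\<lambda>h. \<Sum>k\<in>UNIV. A x $ i $ k * DB h $ k $ j + DA h $ i $ k * B x $ k $ j)) (at x within S)"
    by (intro has_derivative_sum has_derivative_mult has_derivative_matrix_nth assms)
  then show "((\<lambda>y. (A y ** B y) $ i $ j) has_derivative (\<lambda>h. (A x ** DB h + DA h ** B x) $ i $ j)) (at x within S)"
    by (simp add: matrix_matrix_mult_def sum.distrib)
qed

lemma has_derivative_bilin:
  fixes M :: "'a::real_normed_vector \<Rightarrow> real^'n^'n" and v w :: "'a \<Rightarrow> real^'n"
  assumes "(M has_derivative DM) (at x within S)" "(v has_derivative Dv) (at x within S)"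
    "(w has_derivative Dw) (at x within S)"
  shows "((\<lambda>y. bilin (M y) (v y) (w y)) has_derivative
     (\<lambda>h. bilin (DM h) (v x) (w x) + bilin (M x) (Dv h) (w x) + bilin (M x) (v x) (Dw h))) (at x within S)"
proof -
  have "((\<lambda>y. \<Sum>i\<in>UNIV. \<Sum>j\<in>UNIV. v y $ i * M y $ i $ j * w y $ j) has_derivative
     (\<lambda>h. \<Sum>i\<in>UNIV. \<Sum>j\<in>UNIV. v x $ i * M x $ i $ j * Dw h $ j
        + (v x $ i * DM h $ i $ j + Dv h $ i * M x $ i $ j) * w x $ j)) (at x within S)"
    by (intro has_derivative_sum has_derivative_mult has_derivative_matrix_nth has_derivative_vec_nth assms)
  then show ?thesis
    unfolding bilin_def by (simp add: sum.distrib algebra_simps)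
qed

lemma has_derivative_unique_open:
  assumes "open S" "x \<in> S" "\<And>y. y \<in> S \<Longrightarrow> f y = g y"
    "(f has_derivative f') (at x)" "(g has_derivative g') (at x)"
  shows "f' = g'"
proof -
  have "(g has_derivative f') (at x)"
    by (rule has_derivative_transform_within_open[OF assms(4) assms(1,2)]) (use assms(3) in auto)
  then show ?thesis using assms(5) has_derivative_unique by blast
qed

lemma has_derivative_zero_if_constant_along:
  fixes f :: "'a::real_normed_vector \<Rightarrow> real"
  assumes "open S" "x \<in> S" "(f has_derivative f') (at x)"
    and "\<And>t. x + t *\<^sub>R u \<in> S \<Longrightarrow> f (x + t *\<^sub>R u) = f x"
  shows "f' u = 0"
proof -
  define T where "T = (\<lambda>t::real. x + t *\<^sub>R u) -` S"
  have "open T" unfolding T_def by (rule open_vimage[OF assms(1)]) (intro continuous_intros)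
  moreover have "0 \<in> T" using assms(2) by (simp add: T_def)
  moreover have "((\<lambda>t. f (x + t *\<^sub>R u)) has_derivative (\<lambda>t. f' (t *\<^sub>R u))) (at 0)"
    by (rule has_derivative_compose[where f="\<lambda>t. x + t *\<^sub>R u", unfolded o_def])
       (use assms(3) in \<open>auto intro!: derivative_eq_intros\<close>)
  moreover have "((\<lambda>t. f x) has_derivative (\<lambda>t. 0)) (at 0)" by simp
  ultimately have "(\<lambda>t. f' (t *\<^sub>R u)) = (\<lambda>t. 0)"
    by (intro has_derivative_unique_open[of T 0]) (use assms(4) in \<open>auto simp: T_def\<close>)
  then show ?thesis by (metis scaleR_one)
qed

lemma smooth_on_has_derivative:
  assumes "smooth_on S f"
  obtains f' f'' where "\<And>x. x \<in> S \<Longrightarrow> (f has_derivative f' x) (at x)"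
    "\<And>x v. x \<in> S \<Longrightarrow> ((\<lambda>x. f' x v) has_derivative f'' v x) (at x)"
proof -
  have "Ck (Suc (Suc 0)) S f" using assms by (simp add: smooth_on_def)
  then obtain f' where d1: "\<forall>x\<in>S. (f has_derivative f' x) (at x)"
    and c1: "\<forall>v. Ck (Suc 0) S (\<lambda>x. f' x v)"
    by auto
  have "\<forall>v. \<exists>D. \<forall>x\<in>S. ((\<lambda>x. f' x v) has_derivative D x) (at x)"
    using c1 by simp blast
  then obtain f'' where "\<forall>v. \<forall>x\<in>S. ((\<lambda>x. f' x v) has_derivative f'' v x) (at x)" by metis
  then show ?thesis using d1 that by blast
qed

lemma smooth_on_real_deriv:
  assumes "smooth_on UNIV (f::real \<Rightarrow> real)"
  shows "DERIV f u :> deriv f u" "DERIV (deriv f) u :> deriv (deriv f) u"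
proof -
  obtain f' f'' where d1: "\<And>x. x \<in> UNIV \<Longrightarrow> (f has_derivative f' x) (at x)"
    and d2: "\<And>x v. x \<in> UNIV \<Longrightarrow> ((\<lambda>x. f' x v) has_derivative f'' v x) (at x)"
    using smooth_on_has_derivative[OF assms] by metis
  have field: "DERIV g x :> g' x 1" if "(g has_derivative g' x) (at x)" for g :: "real \<Rightarrow> real" and g' x
  proof (rule has_derivative_imp_has_field_derivative[OF that])
    show "h * g' x 1 = g' x h" for h
      using linear_cmul[OF has_derivative_linear[OF that], of h 1] by simp
  qed
  have D1: "DERIV f x :> f' x 1" and D2: "DERIV (\<lambda>x. f' x 1) x :> f'' 1 x 1" for x
    using field d1 d2 by blast+
  have "deriv f = (\<lambda>x. f' x 1)" using D1 by (simp add: DERIV_imp_deriv fun_eq_iff)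
  then show "DERIV f u :> deriv f u" "DERIV (deriv f) u :> deriv (deriv f) u"
    using D1 D2 DERIV_imp_deriv[OF D2] by simp_all
qed

section \<open>The parallel projection of a local product\<close>

lemma matrix_diff_ldistrib: "(A::real^'n^'n) ** (B - C) = A ** B - A ** C"
  by (simp add: vec_eq_iff matrix_matrix_mult_def sum_subtractf right_diff_distrib)

lemma matrix_diff_rdistrib: "((B::real^'n^'n) - C) ** A = B ** A - C ** A"
  by (simp add: vec_eq_iff matrix_matrix_mult_def sum_subtractf left_diff_distrib)

lemma matrix_add_rdistrib: "((B::real^'n^'n) + C) ** A = B ** A + C ** A"
  by (simp add: vec_eq_iff matrix_matrix_mult_def sum.distrib distrib_right)

lemma matrix_vector_mult_matrix: "linear (f::real^'n \<Rightarrow> real^'m) \<Longrightarrow> matrix f *v x = f x"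
  by (drule matrix_vector_mul(2)) (simp add: fun_eq_iff)

lemma det_nonzero_ker: "det (A::real^'n^'n) \<noteq> 0 \<Longrightarrow> A *v x = 0 \<Longrightarrow> x = 0"
  by (metis invertible_det_nz invertible_def matrix_left_invertible_ker)

definition christoffel_map :: "(real^'n \<Rightarrow> 'n \<Rightarrow> real^'n^'n) \<Rightarrow> real^'n \<Rightarrow> real^'n \<Rightarrow> real^'n \<Rightarrow> real^'n::finite" where
  "christoffel_map Gam y v w = (\<Sum>c\<in>UNIV. (v $ c) *\<^sub>R (Gam y c *v w))"

lemma christoffel_map_axis: "christoffel_map Gam y (axis c 1) w = Gam y c *v w"
proof -
  have "christoffel_map Gam y (axis c 1) w = (\<Sum>c'\<in>UNIV. if c' = c then Gam y c *v w else 0)"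
    unfolding christoffel_map_def by (rule sum.cong) (auto simp: axis_def)
  then show ?thesis by simp
qed

lemma christoffel_map_sum_left:
  "christoffel_map Gam y (\<Sum>a\<in>S. f a *\<^sub>R v a) w = (\<Sum>a\<in>S. f a *\<^sub>R christoffel_map Gam y (v a) w)"
proof -
  have "christoffel_map Gam y (\<Sum>a\<in>S. f a *\<^sub>R v a) w = (\<Sum>c\<in>UNIV. \<Sum>a\<in>S. f a *\<^sub>R (v a $ c *\<^sub>R (Gam y c *v w)))"
    unfolding christoffel_map_def by (simp add: scaleR_sum_left)
  also have "\<dots> = (\<Sum>a\<in>S. f a *\<^sub>R christoffel_map Gam y (v a) w)"
    unfolding christoffel_map_def by (subst sum.swap) (simp add: scaleR_sum_right)
  finally show ?thesis .
qed

lemma commutator_curvature_identity: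
  fixes P X Y Gc Gd :: "real^'n^'n"
  assumes "P ** Y + (P ** Gd - Gd ** P) ** Gc - (Gc ** (P ** Gd - Gd ** P) + Y ** P)
         = P ** X + (P ** Gc - Gc ** P) ** Gd - (Gd ** (P ** Gc - Gc ** P) + X ** P)"
  shows "P ** (X - Y + Gc ** Gd - Gd ** Gc) = (X - Y + Gc ** Gd - Gd ** Gc) ** P"
  using assms
  by (simp add: matrix_diff_rdistrib matrix_diff_ldistrib matrix_add_ldistrib matrix_add_rdistrib
      matrix_mul_assoc algebra_simps)

definition curvature_matrix :: "('n \<Rightarrow> real^'n^'n) \<Rightarrow> ('n \<Rightarrow> real^'n \<Rightarrow> real^'n^'n) \<Rightarrow> 'n \<Rightarrow> 'n \<Rightarrow> real^'n^'n::finite"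
  where "curvature_matrix \<Gamma> D\<Gamma> c d = D\<Gamma> d (axis c 1) - D\<Gamma> c (axis d 1) + \<Gamma> c ** \<Gamma> d - \<Gamma> d ** \<Gamma> c"

lemma splice_shift_outside: "r \<notin> I \<Longrightarrow> splice I x (x + t *\<^sub>R axis r 1) = x + t *\<^sub>R axis r (1::real)"
  by (auto simp: vec_eq_iff splice_def axis_def)

lemma splice_shift_inside: "r \<in> I \<Longrightarrow> splice I (x + t *\<^sub>R axis r 1) x = x + t *\<^sub>R axis r (1::real)"
  by (auto simp: vec_eq_iff splice_def axis_def)

locale product_chart =
  fixes g :: "real^'n::finite \<Rightarrow> real^'n^'n" and Dg :: "real^'n \<Rightarrow> real^'n \<Rightarrow> real^'n^'n"
    and Gam :: "real^'n \<Rightarrow> 'n \<Rightarrow> real^'n^'n"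
    and U W :: "(real^'n) set" and \<phi> \<psi> :: "real^'n \<Rightarrow> real^'n" and h :: "real^'n \<Rightarrow> real^'n^'n"
    and I :: "'n set"
    and \<phi>' :: "real^'n \<Rightarrow> real^'n \<Rightarrow> real^'n" and \<phi>'' :: "real^'n \<Rightarrow> real^'n \<Rightarrow> real^'n \<Rightarrow> real^'n"
    and \<psi>' :: "real^'n \<Rightarrow> real^'n \<Rightarrow> real^'n" and \<psi>'' :: "real^'n \<Rightarrow> real^'n \<Rightarrow> real^'n \<Rightarrow> real^'n"
    and h' :: "real^'n \<Rightarrow> real^'n \<Rightarrow> real^'n^'n"
  assumes open_U: "open U" and open_W: "open W"
    and I_proper: "I \<noteq> {}" "I \<noteq> UNIV"
    and h_sym: "\<And>x. x \<in> W \<Longrightarrow> transpose (h x) = h x"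
    and h_det: "\<And>x. x \<in> W \<Longrightarrow> det (h x) \<noteq> 0"
    and h_block: "\<And>x i j. x \<in> W \<Longrightarrow> i \<in> I \<Longrightarrow> j \<notin> I \<Longrightarrow> h x $ i $ j = 0 \<and> h x $ j $ i = 0"
    and h_I: "\<And>x y i j. x \<in> W \<Longrightarrow> y \<in> W \<Longrightarrow> i \<in> I \<Longrightarrow> j \<in> I \<Longrightarrow> h x $ i $ j = h (splice I x y) $ i $ j"
    and h_J: "\<And>x y i j. x \<in> W \<Longrightarrow> y \<in> W \<Longrightarrow> i \<notin> I \<Longrightarrow> j \<notin> I \<Longrightarrow> h x $ i $ j = h (splice I y x) $ i $ j"
    and \<phi>_in: "\<And>x. x \<in> W \<Longrightarrow> \<phi> x \<in> U" and \<psi>_in: "\<And>y. y \<in> U \<Longrightarrow> \<psi> y \<in> W"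
    and \<psi>_\<phi>: "\<And>x. x \<in> W \<Longrightarrow> \<psi> (\<phi> x) = x" and \<phi>_\<psi>: "\<And>y. y \<in> U \<Longrightarrow> \<phi> (\<psi> y) = y"
    and d\<phi>: "\<And>x. x \<in> W \<Longrightarrow> (\<phi> has_derivative \<phi>' x) (at x)"
    and dd\<phi>: "\<And>x v. x \<in> W \<Longrightarrow> ((\<lambda>x. \<phi>' x v) has_derivative \<phi>'' v x) (at x)"
    and d\<psi>: "\<And>y. y \<in> U \<Longrightarrow> (\<psi> has_derivative \<psi>' y) (at y)"
    and dd\<psi>: "\<And>y v. y \<in> U \<Longrightarrow> ((\<lambda>y. \<psi>' y v) has_derivative \<psi>'' v y) (at y)"
    and dh: "\<And>x. x \<in> W \<Longrightarrow> (h has_derivative h' x) (at x)"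
    and h_pullback: "\<And>x i j. x \<in> W \<Longrightarrow> h x $ i $ j = bilin (g (\<phi> x)) (\<phi>' x (axis i 1)) (\<phi>' x (axis j 1))"
    and dg: "\<And>y. y \<in> U \<Longrightarrow> (g has_derivative Dg y) (at y)"
    and g_sym: "\<And>y p q. g y $ p $ q = g y $ q $ p"
    and koszul: "\<And>y v w z. y \<in> U \<Longrightarrow> bilin (g y) (christoffel_map Gam y v w) z
                = (bilin (Dg y v) w z + bilin (Dg y w) v z - bilin (Dg y z) v w) / 2"
begin

abbreviation E :: "'n \<Rightarrow> real^'n \<Rightarrow> real^'n" where "E a x \<equiv> \<phi>' x (axis a 1)"

lemma linear_\<phi>': "x \<in> W \<Longrightarrow> linear (\<phi>' x)"
  using d\<phi> has_derivative_linear by blast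

lemma linear_\<phi>'': "x \<in> W \<Longrightarrow> linear (\<phi>'' v x)"
  using dd\<phi> has_derivative_linear by blast

lemma linear_\<psi>': "y \<in> U \<Longrightarrow> linear (\<psi>' y)"
  using d\<psi> has_derivative_linear by blast

lemma \<phi>''_symmetric:
  assumes x: "x \<in> W"
  shows "\<phi>'' (axis a 1) x (axis b 1) = \<phi>'' (axis b 1) x (axis a 1)"
proof (subst vec_eq_iff, rule allI)
  fix p
  have D1: "\<forall>y\<in>W. ((\<lambda>x. \<phi> x $ p) has_derivative (\<lambda>v. \<phi>' y v $ p)) (at y)"
    using d\<phi> has_derivative_vec_nth by blast
  have D2: "((\<lambda>y. \<phi>' y (axis c 1) $ p) has_derivative (\<lambda>w. \<phi>'' (axis c 1) x w $ p)) (at x)" for c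
    using dd\<phi>[OF x] by (rule has_derivative_vec_nth)
  show "\<phi>'' (axis a 1) x (axis b 1) $ p = \<phi>'' (axis b 1) x (axis a 1) $ p"
    by (rule second_derivative_symmetric[OF open_W x D1 D2 D2])
qed

lemma h'_eq:
  assumes x: "x \<in> W"
  shows "h' x v $ a $ b = bilin (Dg (\<phi> x) (\<phi>' x v)) (E a x) (E b x)
            + bilin (g (\<phi> x)) (\<phi>'' (axis a 1) x v) (E b x) + bilin (g (\<phi> x)) (E a x) (\<phi>'' (axis b 1) x v)"
proof -
  have d1: "((\<lambda>x. h x $ a $ b) has_derivative (\<lambda>v. h' x v $ a $ b)) (at x)"
    using dh[OF x] by (rule has_derivative_matrix_nth)
  have dg\<phi>: "((\<lambda>x. g (\<phi> x)) has_derivative (\<lambda>v. Dg (\<phi> x) (\<phi>' x v))) (at x)"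
    using has_derivative_compose[OF d\<phi>[OF x] dg[OF \<phi>_in[OF x]]] by (simp add: o_def)
  have d2: "((\<lambda>x. bilin (g (\<phi> x)) (E a x) (E b x)) has_derivative
     (\<lambda>v. bilin (Dg (\<phi> x) (\<phi>' x v)) (E a x) (E b x) + bilin (g (\<phi> x)) (\<phi>'' (axis a 1) x v) (E b x)
        + bilin (g (\<phi> x)) (E a x) (\<phi>'' (axis b 1) x v))) (at x)"
    by (rule has_derivative_bilin[OF dg\<phi> dd\<phi>[OF x] dd\<phi>[OF x]])
  have "(\<lambda>v. h' x v $ a $ b) = (\<lambda>v. bilin (Dg (\<phi> x) (\<phi>' x v)) (E a x) (E b x)
      + bilin (g (\<phi> x)) (\<phi>'' (axis a 1) x v) (E b x) + bilin (g (\<phi> x)) (E a x) (\<phi>'' (axis b 1) x v))"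
    by (rule has_derivative_unique_open[OF open_W x _ d1 d2]) (use h_pullback in auto)
  then show ?thesis by metis
qed

lemma h'_mixed:
  assumes x: "x \<in> W" and ab: "a \<in> I \<longleftrightarrow> b \<notin> I"
  shows "h' x v $ a $ b = 0"
proof -
  have d1: "((\<lambda>x. h x $ a $ b) has_derivative (\<lambda>v. h' x v $ a $ b)) (at x)"
    using dh[OF x] by (rule has_derivative_matrix_nth)
  have d2: "((\<lambda>x. 0::real) has_derivative (\<lambda>v. 0)) (at x)" by simp
  have zero: "h y $ a $ b = 0" if "y \<in> W" for y
    using h_block[OF that] ab by (cases "a \<in> I") auto
  have "(\<lambda>v. h' x v $ a $ b) = (\<lambda>v. 0)"
    by (rule has_derivative_unique_open[OF open_W x _ d1 d2]) (use zero in auto)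
  then show ?thesis by metis
qed

lemma h'_I_along_J:
  assumes x: "x \<in> W" and "a \<in> I" "b \<in> I" "r \<notin> I"
  shows "h' x (axis r 1) $ a $ b = 0"
proof (rule has_derivative_zero_if_constant_along[OF open_W x,
    where f="\<lambda>x. h x $ a $ b" and f'="\<lambda>v. h' x v $ a $ b"])
  show "((\<lambda>x. h x $ a $ b) has_derivative (\<lambda>v. h' x v $ a $ b)) (at x)"
    using dh[OF x] by (rule has_derivative_matrix_nth)
  show "h (x + t *\<^sub>R axis r 1) $ a $ b = h x $ a $ b" if "x + t *\<^sub>R axis r 1 \<in> W" for t
    using h_I[OF x that] assms splice_shift_outside[of r I x t] by simp
qed

lemma h'_J_along_I:
  assumes x: "x \<in> W" and "a \<notin> I" "b \<notin> I" "r \<in> I"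
  shows "h' x (axis r 1) $ a $ b = 0"
proof (rule has_derivative_zero_if_constant_along[OF open_W x,
    where f="\<lambda>x. h x $ a $ b" and f'="\<lambda>v. h' x v $ a $ b"])
  show "((\<lambda>x. h x $ a $ b) has_derivative (\<lambda>v. h' x v $ a $ b)) (at x)"
    using dh[OF x] by (rule has_derivative_matrix_nth)
  show "h (x + t *\<^sub>R axis r 1) $ a $ b = h x $ a $ b" if "x + t *\<^sub>R axis r 1 \<in> W" for t
    using h_J[OF x that] assms splice_shift_inside[of r I x t] by simp
qed

lemma h'_koszul_mixed:
  assumes x: "x \<in> W" and bc: "b \<in> I \<longleftrightarrow> c \<notin> I"
  shows "h' x (axis a 1) $ b $ c + h' x (axis b 1) $ a $ c - h' x (axis c 1) $ a $ b = 0"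
proof -
  have "h' x (axis a 1) $ b $ c = 0" using h'_mixed[OF x bc] .
  moreover have "h' x (axis b 1) $ a $ c = 0"
  proof (cases "a \<in> I \<longleftrightarrow> c \<in> I")
    case True then show ?thesis using bc h'_I_along_J[OF x, of a c b] h'_J_along_I[OF x, of a c b] by blast
  next
    case False then show ?thesis using h'_mixed[OF x, of a c] by blast
  qed
  moreover have "h' x (axis c 1) $ a $ b = 0"
  proof (cases "a \<in> I \<longleftrightarrow> b \<in> I")
    case True then show ?thesis using bc h'_I_along_J[OF x, of a b c] h'_J_along_I[OF x, of a b c] by blast
  next
    case False then show ?thesis using h'_mixed[OF x, of a b] by blast
  qed
  ultimately show ?thesis by simp
qed

(* cov_frame x a b is nabla_(E a) (E b), computed in the coordinates of U. *)
definition cov_frame :: "real^'n \<Rightarrow> 'n \<Rightarrow> 'n \<Rightarrow> real^'n" where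
  "cov_frame x a b = \<phi>'' (axis b 1) x (axis a 1) + christoffel_map Gam (\<phi> x) (E a x) (E b x)"

lemma cov_frame_orthogonal:
  assumes x: "x \<in> W" and bc: "b \<in> I \<longleftrightarrow> c \<notin> I"
  shows "bilin (g (\<phi> x)) (cov_frame x a b) (E c x) = 0"
proof -
  let ?G = "g (\<phi> x)"
  let ?X = "\<lambda>a b. \<phi>'' (axis b 1) x (axis a 1)"
  let ?D = "\<lambda>a b c. bilin (Dg (\<phi> x) (E a x)) (E b x) (E c x)"
  have sym: "bilin ?G u w = bilin ?G w u" for u w by (rule bilin_commute) (rule g_sym)
  have h': "h' x (axis r 1) $ p $ q = ?D r p q + bilin ?G (?X r p) (E q x) + bilin ?G (E p x) (?X r q)" for p q r
    using h'_eq[OF x] by simp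
  have X: "?X p q = ?X q p" for p q using \<phi>''_symmetric[OF x] by simp
  have "h' x (axis a 1) $ b $ c + h' x (axis b 1) $ a $ c - h' x (axis c 1) $ a $ b
      = ?D a b c + ?D b a c - ?D c a b + 2 * bilin ?G (?X a b) (E c x)"
    unfolding h' using X[of a c] X[of b c] X[of a b] sym[of "E b x" "?X c a"] sym[of "E a x" "?X c b"]
    by simp
  then have "2 * bilin ?G (?X a b) (E c x) = - (?D a b c + ?D b a c - ?D c a b)"
    using h'_koszul_mixed[OF x bc, of a] by linarith
  then show ?thesis
    unfolding cov_frame_def bilin_add_left koszul[OF \<phi>_in[OF x]] by (simp add: field_simps)
qed

lemma \<phi>'_\<psi>': assumes y: "y \<in> U" shows "\<phi>' (\<psi> y) (\<psi>' y v) = v"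
proof -
  have d1: "((\<lambda>y. \<phi> (\<psi> y)) has_derivative (\<lambda>v. \<phi>' (\<psi> y) (\<psi>' y v))) (at y)"
    using has_derivative_compose[OF d\<psi>[OF y] d\<phi>[OF \<psi>_in[OF y]]] by (simp add: o_def)
  have d2: "((\<lambda>y. y) has_derivative (\<lambda>v. v)) (at y)" by simp
  have "(\<lambda>v. \<phi>' (\<psi> y) (\<psi>' y v)) = (\<lambda>v. v)"
    by (rule has_derivative_unique_open[OF open_U y _ d1 d2]) (use \<phi>_\<psi> in auto)
  then show ?thesis by metis
qed

definition frame_mat :: "real^'n \<Rightarrow> real^'n^'n" where "frame_mat y = matrix (\<phi>' (\<psi> y))"
definition coframe_mat :: "real^'n \<Rightarrow> real^'n^'n" where "coframe_mat y = matrix (\<psi>' y)"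
definition proj_I :: "real^'n^'n" where "proj_I = (\<chi> a b. if a = b \<and> a \<in> I then 1 else 0)"
(* The projection onto the tangent spaces of the I-factor, transported to U. *)
definition proj_field :: "real^'n \<Rightarrow> real^'n^'n" where
  "proj_field y = frame_mat y ** (proj_I ** coframe_mat y)"

lemma frame_coframe: assumes y: "y \<in> U" shows "frame_mat y ** coframe_mat y = mat 1"
proof -
  have "frame_mat y ** coframe_mat y = matrix (\<phi>' (\<psi> y) \<circ> \<psi>' y)"
    unfolding frame_mat_def coframe_mat_def
    by (rule matrix_compose[symmetric]) (use linear_\<psi>'[OF y] linear_\<phi>'[OF \<psi>_in[OF y]] in auto)
  also have "\<phi>' (\<psi> y) \<circ> \<psi>' y = id" using \<phi>'_\<psi>'[OF y] by (auto simp: o_def)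
  finally show ?thesis using matrix_id_mat_1 by (simp add: id_def)
qed

lemma coframe_frame: assumes y: "y \<in> U" shows "coframe_mat y ** frame_mat y = mat 1"
  using frame_coframe[OF y] matrix_left_right_inverse by blast

lemma frame_mat_nth: "frame_mat y $ p $ a = E a (\<psi> y) $ p"
  by (simp add: frame_mat_def matrix_def)

lemma frame_mat_mult: assumes y: "y \<in> U" shows "frame_mat y *v \<alpha> = (\<Sum>d\<in>UNIV. (\<alpha> $ d) *\<^sub>R E d (\<psi> y))"
  unfolding frame_mat_def matrix_vector_mult_matrix[OF linear_\<phi>'[OF \<psi>_in[OF y]]]
  by (rule linear_eq_sum_axis[OF linear_\<phi>'[OF \<psi>_in[OF y]]])

definition "D_frame_mat y v = (\<chi> p a. \<phi>'' (axis a 1) (\<psi> y) (\<psi>' y v) $ p)"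
definition "D_coframe_mat y v = (\<chi> a c. \<psi>'' (axis c 1) y v $ a)"
definition "D_proj_field y v = frame_mat y ** (proj_I ** D_coframe_mat y v) + D_frame_mat y v ** (proj_I ** coframe_mat y)"

lemma frame_mat_deriv: assumes y: "y \<in> U" shows "(frame_mat has_derivative D_frame_mat y) (at y)"
proof (rule has_derivative_matrixI)
  fix p a
  have "((\<lambda>y. \<phi>' (\<psi> y) (axis a 1)) has_derivative (\<lambda>v. \<phi>'' (axis a 1) (\<psi> y) (\<psi>' y v))) (at y)"
    using has_derivative_compose[OF d\<psi>[OF y] dd\<phi>[OF \<psi>_in[OF y]]] by (simp add: o_def)
  then show "((\<lambda>y. frame_mat y $ p $ a) has_derivative (\<lambda>h. D_frame_mat y h $ p $ a)) (at y)"
    unfolding frame_mat_nth D_frame_mat_def by (simp add: has_derivative_vec_nth)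
qed

lemma coframe_mat_deriv: assumes y: "y \<in> U" shows "(coframe_mat has_derivative D_coframe_mat y) (at y)"
proof (rule has_derivative_matrixI)
  fix a c
  have "((\<lambda>y. \<psi>' y (axis c 1) $ a) has_derivative (\<lambda>v. \<psi>'' (axis c 1) y v $ a)) (at y)"
    using dd\<psi>[OF y] by (rule has_derivative_vec_nth)
  then show "((\<lambda>y. coframe_mat y $ a $ c) has_derivative (\<lambda>h. D_coframe_mat y h $ a $ c)) (at y)"
    by (simp add: coframe_mat_def matrix_def D_coframe_mat_def)
qed

lemma proj_field_deriv: assumes y: "y \<in> U" shows "(proj_field has_derivative D_proj_field y) (at y)"
proof -
  have "((\<lambda>y. proj_I ** coframe_mat y) has_derivative (\<lambda>v. proj_I ** D_coframe_mat y v + 0 ** coframe_mat y)) (at y)"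
    by (rule has_derivative_matrix_mult[OF has_derivative_const coframe_mat_deriv[OF y]])
  then show ?thesis unfolding proj_field_def[abs_def] D_proj_field_def
    using has_derivative_matrix_mult[OF frame_mat_deriv[OF y]] by simp
qed

lemma proj_field_frame: assumes y: "y \<in> U" shows "proj_field y ** frame_mat y = frame_mat y ** proj_I"
  unfolding proj_field_def by (simp add: matrix_mul_assoc[symmetric] coframe_frame[OF y])

lemma D_proj_field_eq: assumes y: "y \<in> U"
  shows "D_proj_field y v = (D_frame_mat y v ** proj_I - proj_field y ** D_frame_mat y v) ** coframe_mat y"
proof -
  have d1: "((\<lambda>y. proj_field y ** frame_mat y) has_derivative
      (\<lambda>v. proj_field y ** D_frame_mat y v + D_proj_field y v ** frame_mat y)) (at y)"
    by (rule has_derivative_matrix_mult[OF proj_field_deriv[OF y] frame_mat_deriv[OF y]])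
  have d2: "((\<lambda>y. frame_mat y ** proj_I) has_derivative (\<lambda>v. frame_mat y ** 0 + D_frame_mat y v ** proj_I)) (at y)"
    by (rule has_derivative_matrix_mult[OF frame_mat_deriv[OF y] has_derivative_const])
  have "(\<lambda>v. proj_field y ** D_frame_mat y v + D_proj_field y v ** frame_mat y)
      = (\<lambda>v. frame_mat y ** 0 + D_frame_mat y v ** proj_I)"
    by (rule has_derivative_unique_open[OF open_U y _ d1 d2]) (use proj_field_frame in auto)
  then have "proj_field y ** D_frame_mat y v + D_proj_field y v ** frame_mat y = D_frame_mat y v ** proj_I"
    by (metis (no_types) add_0 times0_right)
  then have "D_proj_field y v ** frame_mat y = D_frame_mat y v ** proj_I - proj_field y ** D_frame_mat y v"
    by (simp add: algebra_simps)
  then have "D_proj_field y v ** frame_mat y ** coframe_mat y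
      = (D_frame_mat y v ** proj_I - proj_field y ** D_frame_mat y v) ** coframe_mat y" by simp
  then show ?thesis by (simp add: matrix_mul_assoc[symmetric] frame_coframe[OF y])
qed

definition cov_col :: "real^'n \<Rightarrow> 'n \<Rightarrow> 'n \<Rightarrow> real^'n" where
  "cov_col y c a = (\<Sum>a'\<in>UNIV. (coframe_mat y $ a' $ c) *\<^sub>R cov_frame (\<psi> y) a' a)"

definition cov_mat :: "real^'n \<Rightarrow> 'n \<Rightarrow> real^'n^'n" where
  "cov_mat y c = (\<chi> p a. cov_col y c a $ p)"

lemma D_frame_mat_axis: assumes y: "y \<in> U"
  shows "D_frame_mat y (axis c 1) = cov_mat y c - Gam y c ** frame_mat y"
proof -
  let ?x = "\<psi> y"
  have x: "?x \<in> W" using \<psi>_in[OF y] .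
  have e: "\<psi>' y (axis c 1) = (\<Sum>a'\<in>UNIV. (coframe_mat y $ a' $ c) *\<^sub>R axis a' 1)"
    using vec_eq_sum_axis[of "\<psi>' y (axis c 1)"] by (simp add: coframe_mat_def matrix_def)
  have col: "\<phi>'' (axis a 1) ?x (\<psi>' y (axis c 1)) = cov_col y c a - Gam y c *v E a ?x" for a
  proof -
    have "\<phi>'' (axis a 1) ?x (\<psi>' y (axis c 1))
        = (\<Sum>a'\<in>UNIV. (coframe_mat y $ a' $ c) *\<^sub>R \<phi>'' (axis a 1) ?x (axis a' 1))"
      unfolding e by (simp add: linear_sum[OF linear_\<phi>''[OF x]] linear_cmul[OF linear_\<phi>''[OF x]])
    also have "\<dots> = cov_col y c a
        - (\<Sum>a'\<in>UNIV. (coframe_mat y $ a' $ c) *\<^sub>R christoffel_map Gam y (E a' ?x) (E a ?x))"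
      by (simp add: cov_col_def cov_frame_def \<phi>_\<psi>[OF y] scaleR_add_right sum.distrib)
    also have "(\<Sum>a'\<in>UNIV. (coframe_mat y $ a' $ c) *\<^sub>R christoffel_map Gam y (E a' ?x) (E a ?x))
        = christoffel_map Gam y (\<phi>' ?x (\<psi>' y (axis c 1))) (E a ?x)"
      unfolding e christoffel_map_sum_left[symmetric]
      by (simp add: linear_sum[OF linear_\<phi>'[OF x]] linear_cmul[OF linear_\<phi>'[OF x]])
    finally show ?thesis by (simp add: \<phi>'_\<psi>'[OF y] christoffel_map_axis)
  qed
  have "(Gam y c ** frame_mat y) $ p $ a = (Gam y c *v E a ?x) $ p" for p a
    by (simp add: matrix_matrix_mult_def matrix_vector_mult_def frame_mat_nth)
  then show ?thesis using col by (simp add: vec_eq_iff D_frame_mat_def cov_mat_def)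
qed

lemma h_frame: assumes y: "y \<in> U" shows "bilin (g y) (E d (\<psi> y)) (E b (\<psi> y)) = h (\<psi> y) $ d $ b"
  using h_pullback[OF \<psi>_in[OF y], of d b] \<phi>_\<psi>[OF y] by simp

lemma bilin_frame_mat: assumes y: "y \<in> U"
  shows "bilin (g y) (frame_mat y *v \<alpha>) w = (\<Sum>d\<in>UNIV. \<alpha> $ d * bilin (g y) (E d (\<psi> y)) w)"
  by (simp add: frame_mat_mult[OF y] bilin_sum_left bilin_scaleR_left)

lemma bilin_frame_mat_frame_mat: assumes y: "y \<in> U"
  shows "bilin (g y) (frame_mat y *v \<alpha>) (frame_mat y *v \<beta>)
    = (\<Sum>d\<in>UNIV. \<Sum>e\<in>UNIV. \<alpha> $ d * \<beta> $ e * h (\<psi> y) $ d $ e)"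
proof -
  have "bilin (g y) (E d (\<psi> y)) (frame_mat y *v \<beta>) = (\<Sum>e\<in>UNIV. \<beta> $ e * h (\<psi> y) $ d $ e)" for d
    by (simp add: frame_mat_mult[OF y] bilin_sum_right bilin_scaleR_right h_frame[OF y])
  then show ?thesis by (simp add: bilin_frame_mat[OF y] sum_distrib_left mult.assoc)
qed

lemma proj_field_mult: "proj_field y *v n = frame_mat y *v (proj_I *v (coframe_mat y *v n))"
  by (simp add: proj_field_def matrix_vector_mul_assoc)

lemma proj_I_mult_nth: "(proj_I *v \<alpha>) $ d = (if d \<in> I then \<alpha> $ d else 0)"
  by (cases "d \<in> I") (simp_all add: matrix_vector_mult_def proj_I_def if_distrib[of "\<lambda>x. x * _"] cong: if_cong)

lemma matrix_mult_proj_I_nth: "(A ** proj_I) $ p $ a = (if a \<in> I then A $ p $ a else 0)"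
proof -
  have "(A ** proj_I) $ p $ a = (\<Sum>k\<in>UNIV. A $ p $ k * (if k = a \<and> k \<in> I then 1 else 0))"
    by (simp add: matrix_matrix_mult_def proj_I_def)
  also have "\<dots> = (\<Sum>k\<in>UNIV. if k = a then (if a \<in> I then A $ p $ k else 0) else 0)"
    by (rule sum.cong) auto
  finally show ?thesis by simp
qed

lemma h_nondegenerate:
  assumes x: "x \<in> W" and z: "\<And>b. (\<Sum>d\<in>UNIV. \<beta> $ d * h x $ d $ b) = 0"
  shows "\<beta> = 0"
proof (rule det_nonzero_ker[OF h_det[OF x]])
  have "h x $ b $ d = h x $ d $ b" for b d
    using arg_cong[OF h_sym[OF x], of "\<lambda>M. M $ d $ b"] by (simp add: transpose_def)
  then have "(h x *v \<beta>) $ b = (\<Sum>d\<in>UNIV. \<beta> $ d * h x $ d $ b)" for b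
    by (simp add: matrix_vector_mult_def mult.commute)
  then show "h x *v \<beta> = 0" using z by (simp add: vec_eq_iff)
qed

lemma coframe_coords_vanish:
  assumes y: "y \<in> U" and J: "J = I \<or> J = - I"
    and orth: "\<And>b. b \<notin> J \<Longrightarrow> bilin (g y) n (E b (\<psi> y)) = 0"
    and d: "d \<notin> J"
  shows "(coframe_mat y *v n) $ d = 0"
proof -
  let ?x = "\<psi> y" and ?\<alpha> = "coframe_mat y *v n"
  have x: "?x \<in> W" using \<psi>_in[OF y] .
  have block: "h ?x $ d $ b = 0" if "d \<in> J \<longleftrightarrow> b \<notin> J" for d b
    using h_block[OF x, of d b] h_block[OF x, of b d] J that by auto
  have n: "n = frame_mat y *v ?\<alpha>" by (simp add: matrix_vector_mul_assoc frame_coframe[OF y])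
  define \<beta> where "\<beta> = (\<chi> d. if d \<in> J then 0 else ?\<alpha> $ d)"
  have "(\<Sum>d\<in>UNIV. \<beta> $ d * h ?x $ d $ b) = 0" for b
  proof (cases "b \<in> J")
    case True then show ?thesis by (intro sum.neutral) (auto simp: \<beta>_def block)
  next
    case False
    have "(\<Sum>d\<in>UNIV. \<beta> $ d * h ?x $ d $ b) = (\<Sum>d\<in>UNIV. ?\<alpha> $ d * h ?x $ d $ b)"
      by (rule sum.cong) (use False in \<open>auto simp: \<beta>_def block\<close>)
    also have "\<dots> = bilin (g y) n (E b ?x)"
      by (subst n) (simp add: bilin_frame_mat[OF y] h_frame[OF y])
    finally show ?thesis using orth[OF False] by simp
  qed
  then have "\<beta> = 0" by (rule h_nondegenerate[OF x])
  then have "\<beta> $ d = 0" by simp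
  then show ?thesis using d by (simp add: \<beta>_def)
qed

lemma proj_field_orthogonal:
  assumes y: "y \<in> U" and orth: "\<And>b. (a \<in> I \<longleftrightarrow> b \<notin> I) \<Longrightarrow> bilin (g y) n (E b (\<psi> y)) = 0"
  shows "proj_field y *v n = (if a \<in> I then n else 0)"
proof -
  let ?\<alpha> = "coframe_mat y *v n"
  have n: "n = frame_mat y *v ?\<alpha>" by (simp add: matrix_vector_mul_assoc frame_coframe[OF y])
  show ?thesis
  proof (cases "a \<in> I")
    case True
    have "?\<alpha> $ d = 0" if "d \<notin> I" for d
      by (rule coframe_coords_vanish[OF y _ _ that]) (use orth True in auto)
    then have "proj_I *v ?\<alpha> = ?\<alpha>" by (auto simp: vec_eq_iff proj_I_mult_nth)
    then show ?thesis using True n by (simp add: proj_field_mult)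
  next
    case False
    have "?\<alpha> $ d = 0" if "d \<in> I" for d
      by (rule coframe_coords_vanish[of y "- I"]) (use orth False that y in auto)
    then have "proj_I *v ?\<alpha> = 0" by (auto simp: vec_eq_iff proj_I_mult_nth)
    then show ?thesis using False by (simp add: proj_field_mult)
  qed
qed

lemma proj_field_cov_mat: assumes y: "y \<in> U" shows "proj_field y ** cov_mat y c = cov_mat y c ** proj_I"
proof -
  have x: "\<psi> y \<in> W" using \<psi>_in[OF y] .
  have col: "proj_field y *v cov_col y c a = (if a \<in> I then cov_col y c a else 0)" for a
  proof (rule proj_field_orthogonal[OF y])
    fix b assume "a \<in> I \<longleftrightarrow> b \<notin> I"
    then show "bilin (g y) (cov_col y c a) (E b (\<psi> y)) = 0"
      using cov_frame_orthogonal[OF x] \<phi>_\<psi>[OF y]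
      by (simp add: cov_col_def bilin_sum_left bilin_scaleR_left)
  qed
  have "(proj_field y ** cov_mat y c) $ p $ a = (cov_mat y c ** proj_I) $ p $ a" for p a
  proof -
    have "(proj_field y ** cov_mat y c) $ p $ a = (proj_field y *v cov_col y c a) $ p"
      by (simp add: matrix_matrix_mult_def matrix_vector_mult_def cov_mat_def)
    moreover have "(cov_mat y c ** proj_I) $ p $ a = (if a \<in> I then cov_col y c a $ p else 0)"
      by (simp add: matrix_mult_proj_I_nth cov_mat_def)
    ultimately show ?thesis by (simp add: col)
  qed
  then show ?thesis by (simp add: vec_eq_iff)
qed

lemma D_proj_field_axis: assumes y: "y \<in> U"
  shows "D_proj_field y (axis c 1) = proj_field y ** Gam y c - Gam y c ** proj_field y"
proof -
  let ?Q = "cov_mat y c" and ?G = "Gam y c" and ?M = "frame_mat y" and ?S = "coframe_mat y"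
    and ?P = "proj_field y"
  have "D_proj_field y (axis c 1) = ((?Q - ?G ** ?M) ** proj_I - ?P ** (?Q - ?G ** ?M)) ** ?S"
    using D_proj_field_eq[OF y] D_frame_mat_axis[OF y] by simp
  also have "\<dots> = ((?Q ** proj_I - ?P ** ?Q) - ?G ** ?M ** proj_I + ?P ** ?G ** ?M) ** ?S"
    by (simp add: matrix_diff_rdistrib matrix_diff_ldistrib matrix_mul_assoc algebra_simps)
  also have "\<dots> = (?P ** ?G ** ?M - ?G ** ?M ** proj_I) ** ?S"
    using proj_field_cov_mat[OF y] by (simp add: algebra_simps)
  also have "\<dots> = ?P ** ?G ** (?M ** ?S) - ?G ** (?M ** (proj_I ** ?S))"
    by (simp add: matrix_diff_rdistrib matrix_mul_assoc)
  also have "\<dots> = ?P ** ?G - ?G ** ?P"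
    by (simp add: frame_coframe[OF y] proj_field_def)
  finally show ?thesis .
qed

lemma proj_I_idem: "proj_I ** proj_I = proj_I"
  by (simp add: vec_eq_iff matrix_mult_proj_I_nth) (simp add: proj_I_def)

lemma proj_field_idem: assumes y: "y \<in> U" shows "proj_field y ** proj_field y = proj_field y"
proof -
  have "proj_field y ** proj_field y = frame_mat y ** (proj_I ** (coframe_mat y ** frame_mat y) ** proj_I) ** coframe_mat y"
    by (simp add: proj_field_def matrix_mul_assoc)
  also have "\<dots> = proj_field y"
    by (simp add: coframe_frame[OF y] proj_I_idem proj_field_def matrix_mul_assoc)
  finally show ?thesis .
qed

lemma proj_I_from_proj_field: assumes y: "y \<in> U" shows "coframe_mat y ** proj_field y ** frame_mat y = proj_I"
proof -
  have "coframe_mat y ** proj_field y ** frame_mat y = (coframe_mat y ** frame_mat y) ** proj_I ** (coframe_mat y ** frame_mat y)"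
    by (simp add: proj_field_def matrix_mul_assoc)
  then show ?thesis by (simp add: coframe_frame[OF y])
qed

lemma proj_field_nonzero: assumes y: "y \<in> U" shows "proj_field y \<noteq> 0"
proof
  assume "proj_field y = 0"
  then have "proj_I = 0" using proj_I_from_proj_field[OF y] by simp
  moreover obtain i where "i \<in> I" using I_proper by blast
  moreover have "proj_I $ i $ i = 1" using \<open>i \<in> I\<close> by (simp add: proj_I_def)
  ultimately show False by simp
qed

lemma proj_field_ne_id: assumes y: "y \<in> U" shows "proj_field y \<noteq> mat 1"
proof
  assume "proj_field y = mat 1"
  then have "proj_I = mat 1" using proj_I_from_proj_field[OF y] coframe_frame[OF y] by simp
  moreover obtain j where "j \<notin> I" using I_proper by blast
  moreover have "proj_I $ j $ j = 0" using \<open>j \<notin> I\<close> by (simp add: proj_I_def)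
  ultimately show False by (simp add: mat_def)
qed

lemma proj_field_selfadjoint: assumes y: "y \<in> U"
  shows "bilin (g y) (proj_field y *v u) w = bilin (g y) u (proj_field y *v w)"
proof -
  let ?x = "\<psi> y" and ?\<alpha> = "coframe_mat y *v u" and ?\<beta> = "coframe_mat y *v w"
  have x: "?x \<in> W" using \<psi>_in[OF y] .
  have u: "u = frame_mat y *v ?\<alpha>" and w: "w = frame_mat y *v ?\<beta>"
    by (simp_all add: matrix_vector_mul_assoc frame_coframe[OF y])
  have "bilin (g y) (proj_field y *v u) w = (\<Sum>d\<in>UNIV. \<Sum>e\<in>UNIV. (proj_I *v ?\<alpha>) $ d * ?\<beta> $ e * h ?x $ d $ e)"
    unfolding proj_field_mult by (subst w) (rule bilin_frame_mat_frame_mat[OF y])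
  also have "\<dots> = (\<Sum>d\<in>UNIV. \<Sum>e\<in>UNIV. ?\<alpha> $ d * (proj_I *v ?\<beta>) $ e * h ?x $ d $ e)"
    by (intro sum.cong refl)
       (use h_block[OF x] in \<open>auto simp: proj_I_mult_nth\<close>)
  also have "\<dots> = bilin (g y) u (proj_field y *v w)"
    unfolding proj_field_mult by (subst u) (rule bilin_frame_mat_frame_mat[OF y, symmetric])
  finally show ?thesis .
qed

lemma proj_field_commutes_curvature:
  assumes y0: "y0 \<in> U" and dGam: "\<And>c. ((\<lambda>y. Gam y c) has_derivative DGam c) (at y0)"
  shows "proj_field y0 ** curvature_matrix (Gam y0) DGam c d = curvature_matrix (Gam y0) DGam c d ** proj_field y0"
proof -
  (* proj_field is parallel, d P (e_c) = [P, Gamma_c]; differentiating once more, the symmetry of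
     second derivatives turns the curl of [P, Gamma] into the commutator of P with curvature. *)
  let ?P = "proj_field y0" and ?G = "Gam y0"
  define L where "L c v = (?P ** DGam c v + D_proj_field y0 v ** ?G c) - (?G c ** D_proj_field y0 v + DGam c v ** ?P)" for c v
  have dL: "((\<lambda>y. D_proj_field y (axis c 1)) has_derivative L c) (at y0)" for c
  proof -
    have "((\<lambda>y. proj_field y ** Gam y c - Gam y c ** proj_field y) has_derivative L c) (at y0)"
      unfolding L_def[abs_def]
      by (intro has_derivative_diff has_derivative_matrix_mult proj_field_deriv[OF y0] dGam)
    then show ?thesis
      by (rule has_derivative_transform_within_open[OF _ open_U y0]) (simp add: D_proj_field_axis)
  qed
  have "L c (axis d 1) $ p $ q = L d (axis c 1) $ p $ q" for p q
  proof -
    have D1: "\<forall>y\<in>U. ((\<lambda>y. proj_field y $ p $ q) has_derivative (\<lambda>v. D_proj_field y v $ p $ q)) (at y)"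
      using proj_field_deriv has_derivative_matrix_nth by blast
    have D2: "((\<lambda>y. D_proj_field y (axis c' 1) $ p $ q) has_derivative (\<lambda>v. L c' v $ p $ q)) (at y0)" for c'
      using dL by (rule has_derivative_matrix_nth)
    show ?thesis by (rule second_derivative_symmetric[OF open_U y0 D1 D2 D2])
  qed
  then have "L c (axis d 1) = L d (axis c 1)" by (simp add: vec_eq_iff)
  then show ?thesis
    unfolding curvature_matrix_def
    by (intro commutator_curvature_identity) (simp add: L_def D_proj_field_axis[OF y0])
qed

end

section \<open>Christoffel symbols and curvature of g_F\<close>

definition uu_block :: "nat \<Rightarrow> (nat \<Rightarrow> real \<Rightarrow> real) \<Rightarrow> (nat \<Rightarrow> real) \<Rightarrow> nat \<Rightarrow> nat \<Rightarrow> real" where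
  "uu_block k F Y a b =
    (if a = 0 \<and> 1 \<le> b \<and> b \<le> k then 2 * F b (Y b) * Y (2*k+1+b)
     else if b = 0 \<and> 1 \<le> a \<and> a \<le> k then 2 * F a (Y a) * Y (2*k+1+a)
     else if a = b \<and> 1 \<le> a \<and> a \<le> k then - 2 * Y 0 * Y (2*k+1+a)
     else 0)"

definition uu_block_partial :: "nat \<Rightarrow> (nat \<Rightarrow> real \<Rightarrow> real) \<Rightarrow> (nat \<Rightarrow> real) \<Rightarrow> nat \<Rightarrow> nat \<Rightarrow> nat \<Rightarrow> real" where
  "uu_block_partial k F Y r a b =
    (if a = 0 \<and> 1 \<le> b \<and> b \<le> k then
       (if r = b then 2 * deriv (F b) (Y b) * Y (2*k+1+b) else if r = 2*k+1+b then 2 * F b (Y b) else 0)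
     else if b = 0 \<and> 1 \<le> a \<and> a \<le> k then
       (if r = a then 2 * deriv (F a) (Y a) * Y (2*k+1+a) else if r = 2*k+1+a then 2 * F a (Y a) else 0)
     else if a = b \<and> 1 \<le> a \<and> a \<le> k then
       (if r = 0 then - 2 * Y (2*k+1+a) else if r = 2*k+1+a then - 2 * Y 0 else 0)
     else 0)"

definition uu_block_partial2 ::
  "nat \<Rightarrow> (nat \<Rightarrow> real \<Rightarrow> real) \<Rightarrow> (nat \<Rightarrow> real) \<Rightarrow> nat \<Rightarrow> nat \<Rightarrow> nat \<Rightarrow> nat \<Rightarrow> real" where
  "uu_block_partial2 k F Y t r a b =
    (if a = 0 \<and> 1 \<le> b \<and> b \<le> k then
       (if r = b then (if t = b then 2 * deriv (deriv (F b)) (Y b) * Y (2*k+1+b)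
                       else if t = 2*k+1+b then 2 * deriv (F b) (Y b) else 0)
        else if r = 2*k+1+b then (if t = b then 2 * deriv (F b) (Y b) else 0) else 0)
     else if b = 0 \<and> 1 \<le> a \<and> a \<le> k then
       (if r = a then (if t = a then 2 * deriv (deriv (F a)) (Y a) * Y (2*k+1+a)
                       else if t = 2*k+1+a then 2 * deriv (F a) (Y a) else 0)
        else if r = 2*k+1+a then (if t = a then 2 * deriv (F a) (Y a) else 0) else 0)
     else if a = b \<and> 1 \<le> a \<and> a \<le> k then
       (if r = 0 then (if t = 2*k+1+a then - 2 else 0) else if r = 2*k+1+a then (if t = 0 then - 2 else 0) else 0)
     else 0)"

definition koszul_comb :: "(nat \<Rightarrow> nat \<Rightarrow> nat \<Rightarrow> real) \<Rightarrow> nat \<Rightarrow> nat \<Rightarrow> nat \<Rightarrow> real" where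
  "koszul_comb D a b c = (D a b c + D b a c - D c a b) / 2"

(* In label coordinates, raise k eps f is g_F^-1 applied to a covector f vanishing on the V-labels:
   its U-components vanish, its V_a-component is f U_a and its S_i-component is eps_i * f S_i.
   Hence christoffel k eps F Y p a b is Gamma^p_ab at the point with coordinates Y, and
   christoffel_partial k eps F Y t p a b is its derivative along the t-th coordinate. *)
definition raise :: "nat \<Rightarrow> (nat \<Rightarrow> real) \<Rightarrow> (nat \<Rightarrow> real) \<Rightarrow> nat \<Rightarrow> real" where
  "raise k eps f p = (if k+1 \<le> p \<and> p \<le> 2*k+1 then f (p - (k+1))
      else if 2*k+2 \<le> p \<and> p \<le> 3*k+1 then eps (p - (2*k+1)) * f p else 0)"

definition christoffel :: "nat \<Rightarrow> (nat \<Rightarrow> real) \<Rightarrow> (nat \<Rightarrow> real \<Rightarrow> real) \<Rightarrow> (nat \<Rightarrow> real) \<Rightarrow> nat \<Rightarrow> nat \<Rightarrow> nat \<Rightarrow> real" where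
  "christoffel k eps F Y p a b = raise k eps (koszul_comb (uu_block_partial k F Y) a b) p"

definition christoffel_partial ::
  "nat \<Rightarrow> (nat \<Rightarrow> real) \<Rightarrow> (nat \<Rightarrow> real \<Rightarrow> real) \<Rightarrow> (nat \<Rightarrow> real) \<Rightarrow> nat \<Rightarrow> nat \<Rightarrow> nat \<Rightarrow> nat \<Rightarrow> real" where
  "christoffel_partial k eps F Y t p a b = raise k eps (koszul_comb (uu_block_partial2 k F Y t) a b) p"

lemma gF_nth: "gF k idx eps F y $ p $ q = Gm k eps (idx p) (idx q) + uu_block k F (coord idx y) (idx p) (idx q)"
  by (auto simp: gF_def Gm_def uu_block_def Let_def)

lemma uu_block_partial_sym: "uu_block_partial k F Y r a b = uu_block_partial k F Y r b a"
  by (auto simp: uu_block_partial_def)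

lemma uu_block_partial2_sym: "uu_block_partial2 k F Y t r a b = uu_block_partial2 k F Y t r b a"
  unfolding uu_block_partial2_def by (cases "a = 0"; cases "b = 0"; cases "a = b") simp_all

lemma uu_block_partial_V:
  "k < q \<Longrightarrow> q \<le> 2*k+1 \<Longrightarrow> q = r \<or> q = a \<or> q = b \<Longrightarrow> uu_block_partial k F Y r a b = 0"
  by (auto simp: uu_block_partial_def)

lemma uu_block_sym: "uu_block k F Y a b = uu_block k F Y b a"
  by (auto simp: uu_block_def)

(* Entries (p, r) of the curvature matrices K(U_0, U_i) and K(U_i, S_i); in the products of
   Christoffel symbols only the summation index S_i contributes. *)
definition curv_U0Ui :: "nat \<Rightarrow> (nat \<Rightarrow> real) \<Rightarrow> (nat \<Rightarrow> real \<Rightarrow> real) \<Rightarrow> (nat \<Rightarrow> real) \<Rightarrow> nat \<Rightarrow> nat \<Rightarrow> nat \<Rightarrow> real"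
  where "curv_U0Ui k eps F Y i m r =
     christoffel_partial k eps F Y 0 m i r - christoffel_partial k eps F Y i m 0 r
   + christoffel k eps F Y m 0 (2*k+1+i) * christoffel k eps F Y (2*k+1+i) i r
   - christoffel k eps F Y m i (2*k+1+i) * christoffel k eps F Y (2*k+1+i) 0 r"

definition curv_UiSi :: "nat \<Rightarrow> (nat \<Rightarrow> real) \<Rightarrow> (nat \<Rightarrow> real \<Rightarrow> real) \<Rightarrow> (nat \<Rightarrow> real) \<Rightarrow> nat \<Rightarrow> nat \<Rightarrow> nat \<Rightarrow> real"
  where "curv_UiSi k eps F Y i m r =
     christoffel_partial k eps F Y i m (2*k+1+i) r - christoffel_partial k eps F Y (2*k+1+i) m i r
   + christoffel k eps F Y m i (2*k+1+i) * christoffel k eps F Y (2*k+1+i) (2*k+1+i) r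
   - christoffel k eps F Y m (2*k+1+i) (2*k+1+i) * christoffel k eps F Y (2*k+1+i) i r"

context
  fixes k i :: nat and eps :: "nat \<Rightarrow> real" and F :: "nat \<Rightarrow> real \<Rightarrow> real" and Y :: "nat \<Rightarrow> real"
  assumes i: "1 \<le> i" "i \<le> k"
begin

private lemmas unfold_all = curv_U0Ui_def curv_UiSi_def christoffel_partial_def christoffel_def raise_def
  koszul_comb_def uu_block_partial_def uu_block_partial2_def

private lemma r_cases: obtains "r = 0" | "r = i" | "r = 2*k+1+i" | "r \<noteq> 0" "r \<noteq> i" "r \<noteq> 2*k+1+i"
  by blast

lemma curv_U0Ui_V:
  assumes "a \<le> k"
  shows "curv_U0Ui k eps F Y i (k+1+a) r =
    (if a = 0 then eps i * (F i (Y i))^2 * (if r = i then 1 else 0)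
     else if a = i then - eps i * (F i (Y i))^2 * (if r = 0 then 1 else 0)
       - (1 + deriv (F i) (Y i)) * (if r = 2*k+1+i then 1 else 0) else 0)"
proof -
  consider "a = 0" | "a = i" | "a \<noteq> 0" "a \<noteq> i" by blast
  then show ?thesis
  proof cases
    case 1 then show ?thesis using i by (cases rule: r_cases[of r]) (simp_all add: unfold_all power2_eq_square)
  next
    case 2 then show ?thesis using i by (cases rule: r_cases[of r]) (simp_all add: unfold_all power2_eq_square algebra_simps)
  next
    case 3 then show ?thesis using i assms by (cases rule: r_cases[of r]) (simp_all add: unfold_all)
  qed
qed

lemma curv_U0Ui_S:
  assumes "1 \<le> j" "j \<le> k"
  shows "curv_U0Ui k eps F Y i (2*k+1+j) r = (if j = i then eps i * (1 + deriv (F i) (Y i)) * (if r = i then 1 else 0) else 0)"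
proof (cases "j = i")
  case True then show ?thesis using i by (cases rule: r_cases[of r]) (simp_all add: unfold_all algebra_simps)
next
  case False then show ?thesis using i assms by (cases rule: r_cases[of r]) (simp_all add: unfold_all)
qed

lemma curv_UiSi_V:
  assumes "a \<le> k"
  shows "curv_UiSi k eps F Y i (k+1+a) r = (if a = 0 then - (1 + deriv (F i) (Y i)) * (if r = i then 1 else 0)
      else if a = i then (1 + deriv (F i) (Y i)) * (if r = 0 then 1 else 0) else 0)"
proof -
  consider "a = 0" | "a = i" | "a \<noteq> 0" "a \<noteq> i" by blast
  then show ?thesis
  proof cases
    case 1 then show ?thesis using i by (cases rule: r_cases[of r]) (simp_all add: unfold_all algebra_simps)
  next
    case 2 then show ?thesis using i by (cases rule: r_cases[of r]) (simp_all add: unfold_all algebra_simps)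
  next
    case 3 then show ?thesis using i assms by (cases rule: r_cases[of r]) (simp_all add: unfold_all)
  qed
qed

lemma curv_UiSi_S: "1 \<le> j \<Longrightarrow> j \<le> k \<Longrightarrow> curv_UiSi k eps F Y i (2*k+1+j) r = 0"
  using i by (cases rule: r_cases[of r]) (simp_all add: unfold_all)

lemma curv_U: "m \<le> k \<Longrightarrow> curv_U0Ui k eps F Y i m r = 0 \<and> curv_UiSi k eps F Y i m r = 0"
  by (simp add: curv_U0Ui_def curv_UiSi_def christoffel_partial_def christoffel_def raise_def)

lemma curv_U0Ui_lowered:
  assumes epsi: "eps i * eps i = 1" and q: "q < 3*k+2"
  shows "(if q \<le> k then curv_U0Ui k eps F Y i (k+1+q) r
          else if 2*k+2 \<le> q \<and> q \<le> 3*k+1 then eps (q - (2*k+1)) * curv_U0Ui k eps F Y i q r else 0)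
    = (1 + deriv (F i) (Y i)) * ((if r = i \<and> q = 2*k+1+i then 1 else 0) - (if r = 2*k+1+i \<and> q = i then 1 else 0))
      + eps i * (F i (Y i))^2 * ((if r = i \<and> q = 0 then 1 else 0) - (if r = 0 \<and> q = i then 1 else 0))"
  using q
proof (cases rule: label_cases)
  case U then show ?thesis using i curv_U0Ui_V[of q r] by (auto simp: algebra_simps)
next
  case (V a) then show ?thesis using i by auto
next
  case (S j)
  then have "2*k+1+j - (2*k+1) = j" by simp
  then show ?thesis using S i curv_U0Ui_S[of j r] epsi by (auto simp: algebra_simps)
qed

lemma curv_UiSi_lowered:
  assumes q: "q < 3*k+2"
  shows "(if q \<le> k then curv_UiSi k eps F Y i (k+1+q) r
          else if 2*k+2 \<le> q \<and> q \<le> 3*k+1 then eps (q - (2*k+1)) * curv_UiSi k eps F Y i q r else 0)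
    = (1 + deriv (F i) (Y i)) * ((if r = 0 \<and> q = i then 1 else 0) - (if r = i \<and> q = 0 then 1 else 0))"
  using q
proof (cases rule: label_cases)
  case U then show ?thesis using i curv_UiSi_V[of q r] by (auto simp: algebra_simps)
next
  case (V a) then show ?thesis using i by auto
next
  case (S j) then show ?thesis using i curv_UiSi_S[of j r] by auto
qed

lemma christoffel_i_S:
  assumes "2*k+1 < m" "m \<le> 3*k+1" "m \<noteq> 2*k+1+i"
  shows "christoffel k eps F Y P i m = 0" "christoffel k eps F Y m i R = 0"
  using i assms by (auto simp: christoffel_def raise_def koszul_comb_def uu_block_partial_def)

end

definition trisum :: "('n \<Rightarrow> 'n \<Rightarrow> 'n \<Rightarrow> real) \<Rightarrow> real^'n \<Rightarrow> real^'n \<Rightarrow> real^'n \<Rightarrow> real" where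
  "trisum T v w z = (\<Sum>c\<in>UNIV. \<Sum>b\<in>UNIV. \<Sum>q\<in>UNIV. v $ c * w $ b * z $ q * T c b q)"

lemma trisum_swap12: "trisum T v w z = trisum (\<lambda>b c q. T c b q) w v z"
  unfolding trisum_def by (subst sum.swap) (simp add: mult_ac)

lemma trisum_rotate: "trisum T v w z = trisum (\<lambda>q c b. T c b q) z v w"
  unfolding trisum_def by (subst (2) sum.swap, subst sum.swap) (simp add: mult_ac)

lemma trisum_add: "trisum (\<lambda>c b q. S c b q + T c b q) v w z = trisum S v w z + trisum T v w z"
  unfolding trisum_def by (simp add: sum.distrib distrib_left)

lemma trisum_diff: "trisum (\<lambda>c b q. S c b q - T c b q) v w z = trisum S v w z - trisum T v w z"
  unfolding trisum_def by (simp add: sum_subtractf right_diff_distrib)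

lemma trisum_divide: "trisum (\<lambda>c b q. T c b q / 2) v w z = trisum T v w z / 2"
  unfolding trisum_def by (simp add: sum_divide_distrib)

locale gF_setting = labelling k idx for k :: nat and idx :: "'n::finite \<Rightarrow> nat" +
  fixes eps :: "nat \<Rightarrow> real" and F :: "nat \<Rightarrow> real \<Rightarrow> real"
  assumes eps_sign: "\<forall>i\<in>{1..k}. eps i = 1 \<or> eps i = -1"
    and F_smooth: "\<forall>i\<in>{1..k}. smooth_on UNIV (F i)"
begin

abbreviation Yc :: "real^'n \<Rightarrow> nat \<Rightarrow> real" where "Yc y \<equiv> coord idx y"

abbreviation g :: "real^'n \<Rightarrow> real^'n^'n" where "g \<equiv> gF k idx eps F"

lemma F_deriv: "1 \<le> i \<Longrightarrow> i \<le> k \<Longrightarrow> DERIV (F i) u :> deriv (F i) u"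
  and F_deriv2: "1 \<le> i \<Longrightarrow> i \<le> k \<Longrightarrow> DERIV (deriv (F i)) u :> deriv (deriv (F i)) u"
  using smooth_on_real_deriv F_smooth by auto

lemma sum_label_one:
  assumes "m < 3*k+2"
  shows "(\<Sum>r\<in>UNIV. (v::real^'n) $ r * (if idx r = m then X else 0)) = v $ ix m * X"
proof -
  have "(\<Sum>r\<in>UNIV. v $ r * (if idx r = m then X else 0)) = (\<Sum>r\<in>UNIV. if r = ix m then v $ r * X else 0)"
    by (rule sum.cong) (auto simp: eq_ix_iff[OF assms])
  then show ?thesis by simp
qed

lemma sum_label_two:
  assumes "m1 < 3*k+2" "m2 < 3*k+2" "m1 \<noteq> m2"
  shows "(\<Sum>r\<in>UNIV. (v::real^'n) $ r * (if idx r = m1 then X else if idx r = m2 then Z else 0))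
       = v $ ix m1 * X + v $ ix m2 * Z"
proof -
  have "(\<Sum>r\<in>UNIV. v $ r * (if idx r = m1 then X else if idx r = m2 then Z else 0))
      = (\<Sum>r\<in>UNIV. v $ r * (if idx r = m1 then X else 0) + v $ r * (if idx r = m2 then Z else 0))"
    by (rule sum.cong) (use assms in auto)
  then show ?thesis using sum_label_one[OF assms(1), of v X] sum_label_one[OF assms(2), of v Z]
    by (simp add: sum.distrib)
qed

lemma has_derivative_Yc: "((\<lambda>y. Yc y m) has_derivative (\<lambda>v. v $ ix m)) (at y)"
  unfolding coord_eq_nth by (rule bounded_linear.has_derivative[OF bounded_linear_vec_nth, of _ "\<lambda>v. v"]) simp

lemma has_derivative_scaled_comp:
  assumes "DERIV f (Yc y m) :> D" "E = c * D" "m < 3*k+2"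
  shows "((\<lambda>y. c * f (Yc y m)) has_derivative
     (\<lambda>v. \<Sum>t\<in>UNIV. v $ t * (if idx t = m then E else 0))) (at y)"
proof (rule has_derivative_eq_rhs)
  show "((\<lambda>y. c * f (Yc y m)) has_derivative (\<lambda>v. c * (v $ ix m * D))) (at y)"
    using has_derivative_mult_right[OF DERIV_compose_FDERIV[OF assms(1) has_derivative_Yc]] .
qed (use assms in \<open>auto simp: sum_label_one algebra_simps\<close>)

lemma has_derivative_scaled_comp_mult:
  assumes "DERIV f (Yc y m) :> D" "E = c * D" "m < 3*k+2" "m' < 3*k+2" "m \<noteq> m'"
  shows "((\<lambda>y. c * f (Yc y m) * Yc y m') has_derivative
     (\<lambda>v. \<Sum>t\<in>UNIV. v $ t * (if idx t = m then E * Yc y m' else if idx t = m' then c * f (Yc y m) else 0)))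
     (at y)"
proof (rule has_derivative_eq_rhs)
  show "((\<lambda>y. c * f (Yc y m) * Yc y m') has_derivative
      (\<lambda>v. c * f (Yc y m) * v $ ix m' + c * (v $ ix m * D) * Yc y m')) (at y)"
    using has_derivative_mult[OF has_derivative_mult_right[OF DERIV_compose_FDERIV[OF assms(1) has_derivative_Yc]]
        has_derivative_Yc] .
qed (use assms in \<open>auto simp: sum_label_two algebra_simps\<close>)

lemma uu_block_deriv:
  "((\<lambda>y. uu_block k F (Yc y) a b) has_derivative
     (\<lambda>v. \<Sum>r\<in>UNIV. v $ r * uu_block_partial k F (Yc y) (idx r) a b)) (at y)"
proof -
  have off_deriv: "((\<lambda>y. uu_block k F (Yc y) 0 i) has_derivative
     (\<lambda>v. \<Sum>r\<in>UNIV. v $ r * uu_block_partial k F (Yc y) (idx r) 0 i)) (at y)" if "1 \<le> i" "i \<le> k" for i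
    using has_derivative_scaled_comp_mult[where m=i and m'="2*k+1+i" and c=2, OF F_deriv[OF that] refl] that
    by (simp add: uu_block_def uu_block_partial_def)
  have diag_deriv: "((\<lambda>y. uu_block k F (Yc y) i i) has_derivative
     (\<lambda>v. \<Sum>r\<in>UNIV. v $ r * uu_block_partial k F (Yc y) (idx r) i i)) (at y)" if "1 \<le> i" "i \<le> k" for i
    using has_derivative_scaled_comp_mult[where m=0 and m'="2*k+1+i" and c="- 2" and E="- 2", OF DERIV_ident] that
    by (simp add: uu_block_def uu_block_partial_def)
  consider (off) i where "1 \<le> i" "i \<le> k" "a = 0" "b = i" | (off') i where "1 \<le> i" "i \<le> k" "a = i" "b = 0"
    | (diag) i where "1 \<le> i" "i \<le> k" "a = i" "b = i"
    | (zero) "\<not> (a = 0 \<and> 1 \<le> b \<and> b \<le> k)" "\<not> (b = 0 \<and> 1 \<le> a \<and> a \<le> k)" "\<not> (a = b \<and> 1 \<le> a \<and> a \<le> k)"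
    by blast
  then show ?thesis
  proof cases
    case off then show ?thesis using off_deriv by simp
  next
    case off' then show ?thesis using off_deriv[of i] by (simp add: uu_block_sym[of k F _ i] uu_block_partial_sym[of k F _ _ i])
  next
    case diag then show ?thesis using diag_deriv by simp
  next
    case zero
    then have "uu_block k F Y a b = 0" "uu_block_partial k F Y r a b = 0" for Y r
      by (auto simp: uu_block_def uu_block_partial_def)
    then show ?thesis by simp
  qed
qed

lemma uu_block_partial_deriv_0i:
  assumes i: "1 \<le> i" "i \<le> k"
  shows "((\<lambda>y. uu_block_partial k F (Yc y) r 0 i) has_derivative
     (\<lambda>v. \<Sum>t\<in>UNIV. v $ t * uu_block_partial2 k F (Yc y) (idx t) r 0 i)) (at y)"
proof -
  consider "r = i" | "r = 2*k+1+i" | "r \<noteq> i" "r \<noteq> 2*k+1+i" by blast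
  then show ?thesis
  proof cases
    case 1 then show ?thesis
      using has_derivative_scaled_comp_mult[where m=i and m'="2*k+1+i" and c=2, OF F_deriv2[OF i] refl] i
      by (simp add: uu_block_partial_def uu_block_partial2_def)
  next
    case 2 then show ?thesis
      using has_derivative_scaled_comp[where m=i and c=2, OF F_deriv[OF i] refl] i
      by (simp add: uu_block_partial_def uu_block_partial2_def)
  next
    case 3 then show ?thesis using i by (simp add: uu_block_partial_def uu_block_partial2_def)
  qed
qed

lemma uu_block_partial_deriv_ii:
  assumes i: "1 \<le> i" "i \<le> k"
  shows "((\<lambda>y. uu_block_partial k F (Yc y) r i i) has_derivative
     (\<lambda>v. \<Sum>t\<in>UNIV. v $ t * uu_block_partial2 k F (Yc y) (idx t) r i i)) (at y)"
proof -
  consider "r = 0" | "r = 2*k+1+i" | "r \<noteq> 0" "r \<noteq> 2*k+1+i" by blast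
  then show ?thesis
  proof cases
    case 1 then show ?thesis
      using has_derivative_scaled_comp[where m="2*k+1+i" and c="- 2" and E="- 2", OF DERIV_ident] i
      by (simp add: uu_block_partial_def uu_block_partial2_def)
  next
    case 2 then show ?thesis
      using has_derivative_scaled_comp[where m=0 and c="- 2" and E="- 2", OF DERIV_ident] i
      by (simp add: uu_block_partial_def uu_block_partial2_def)
  next
    case 3 then show ?thesis using i by (simp add: uu_block_partial_def uu_block_partial2_def)
  qed
qed

lemma uu_block_partial_deriv:
  "((\<lambda>y. uu_block_partial k F (Yc y) r a b) has_derivative
     (\<lambda>v. \<Sum>t\<in>UNIV. v $ t * uu_block_partial2 k F (Yc y) (idx t) r a b)) (at y)"
proof -
  consider (off) i where "1 \<le> i" "i \<le> k" "a = 0" "b = i" | (off') i where "1 \<le> i" "i \<le> k" "a = i" "b = 0"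
    | (diag) i where "1 \<le> i" "i \<le> k" "a = i" "b = i"
    | (zero) "\<not> (a = 0 \<and> 1 \<le> b \<and> b \<le> k)" "\<not> (b = 0 \<and> 1 \<le> a \<and> a \<le> k)" "\<not> (a = b \<and> 1 \<le> a \<and> a \<le> k)"
    by blast
  then show ?thesis
  proof cases
    case off then show ?thesis using uu_block_partial_deriv_0i by simp
  next
    case off' then show ?thesis
      using uu_block_partial_deriv_0i[of i] by (simp add: uu_block_partial_sym[of k F _ _ i] uu_block_partial2_sym[of k F _ _ _ i])
  next
    case diag then show ?thesis using uu_block_partial_deriv_ii by simp
  next
    case zero
    then have "uu_block_partial k F Y r a b = 0" "uu_block_partial2 k F Y t r a b = 0" for Y t
      by (auto simp: uu_block_partial_def uu_block_partial2_def)
    then show ?thesis by simp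
  qed
qed

lemma gF_sym: "g y $ p $ q = g y $ q $ p"
  by (simp add: gF_nth uu_block_sym) (auto simp: Gm_def)

lemma gF_V_row: "a \<le> k \<Longrightarrow> g y $ ix (k+1+a) = axis (ix a) 1"
  by (auto simp: vec_eq_iff gF_nth Gm_def uu_block_def axis_nth_eq eq_ix_iff)

definition Dg :: "real^'n \<Rightarrow> real^'n \<Rightarrow> real^'n^'n" where
  "Dg y v = (\<chi> p q. \<Sum>r\<in>UNIV. v $ r * uu_block_partial k F (Yc y) (idx r) (idx p) (idx q))"

definition Gam :: "real^'n \<Rightarrow> 'n \<Rightarrow> real^'n^'n" where
  "Gam y c = (\<chi> p q. christoffel k eps F (Yc y) (idx p) (idx c) (idx q))"

definition DGam :: "real^'n \<Rightarrow> 'n \<Rightarrow> real^'n \<Rightarrow> real^'n^'n" where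
  "DGam y c v = (\<chi> p q. \<Sum>t\<in>UNIV. v $ t * christoffel_partial k eps F (Yc y) (idx t) (idx p) (idx c) (idx q))"

lemma gF_deriv: "(g has_derivative Dg y) (at y)"
  by (rule has_derivative_matrixI)
     (use has_derivative_add[OF has_derivative_const uu_block_deriv] in \<open>simp add: gF_nth Dg_def\<close>)

lemma has_derivative_raise:
  assumes "\<And>m. ((\<lambda>y. h y m) has_derivative (\<lambda>v. \<Sum>t\<in>UNIV. v $ t * dh t m)) (at y)"
  shows "((\<lambda>y. raise k eps (h y) p) has_derivative (\<lambda>v. \<Sum>t\<in>UNIV. v $ t * raise k eps (dh t) p)) (at y)"
proof -
  consider "k+1 \<le> p \<and> p \<le> 2*k+1" | "\<not> (k+1 \<le> p \<and> p \<le> 2*k+1)" "2*k+2 \<le> p \<and> p \<le> 3*k+1"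
    | "\<not> (k+1 \<le> p \<and> p \<le> 2*k+1)" "\<not> (2*k+2 \<le> p \<and> p \<le> 3*k+1)" by blast
  then show ?thesis
  proof cases
    case 1
    then have "raise k eps f p = f (p - (k+1))" for f by (simp add: raise_def)
    then show ?thesis by (simp add: assms)
  next
    case 2
    then have eq: "raise k eps f p = eps (p - (2*k+1)) * f p" for f by (simp add: raise_def)
    have "((\<lambda>y. eps (p - (2*k+1)) * h y p) has_derivative
         (\<lambda>v. eps (p - (2*k+1)) * (\<Sum>t\<in>UNIV. v $ t * dh t p))) (at y)"
      by (intro has_derivative_mult_right assms)
    then show ?thesis unfolding eq by (simp add: sum_distrib_left mult_ac)
  next
    case 3
    then have "raise k eps f p = 0" for f by (auto simp: raise_def)
    then show ?thesis by simp
  qed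
qed

lemma Gam_deriv: "((\<lambda>y. Gam y c) has_derivative DGam y c) (at y)"
proof (rule has_derivative_matrixI)
  fix p q
  have "((\<lambda>y. koszul_comb (uu_block_partial k F (Yc y)) a b m) has_derivative
      (\<lambda>v. \<Sum>t\<in>UNIV. v $ t * koszul_comb (uu_block_partial2 k F (Yc y) (idx t)) a b m)) (at y)" for a b m
  proof (rule has_derivative_eq_rhs)
    show "((\<lambda>y. koszul_comb (uu_block_partial k F (Yc y)) a b m) has_derivative
      (\<lambda>v. ((\<Sum>t\<in>UNIV. v $ t * uu_block_partial2 k F (Yc y) (idx t) a b m)
          + (\<Sum>t\<in>UNIV. v $ t * uu_block_partial2 k F (Yc y) (idx t) b a m)
          - (\<Sum>t\<in>UNIV. v $ t * uu_block_partial2 k F (Yc y) (idx t) m a b)) / 2)) (at y)"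
      unfolding koszul_comb_def divide_inverse
      by (intro has_derivative_mult_left has_derivative_add has_derivative_diff uu_block_partial_deriv)
  qed (simp add: fun_eq_iff koszul_comb_def sum_divide_distrib[symmetric] sum.distrib[symmetric]
        sum_subtractf[symmetric] algebra_simps)
  then show "((\<lambda>y. Gam y c $ p $ q) has_derivative (\<lambda>v. DGam y c v $ p $ q)) (at y)"
    unfolding Gam_def DGam_def christoffel_def christoffel_partial_def
    by (simp add: has_derivative_raise)
qed

lemma sum_lower_gF:
  assumes U0: "\<And>m. m \<le> k \<Longrightarrow> f m = 0"
  shows "(\<Sum>p\<in>UNIV. f (idx p) * g y $ p $ q) = (if idx q \<le> k then f (k+1+idx q)
     else if 2*k+2 \<le> idx q \<and> idx q \<le> 3*k+1 then eps (idx q - (2*k+1)) * f (idx q) else 0)"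
proof -
  have "(\<Sum>p\<in>UNIV. f (idx p) * uu_block k F (Yc y) (idx p) (idx q)) = 0"
    by (rule sum.neutral) (auto simp: uu_block_def U0)
  moreover have "(\<Sum>p\<in>UNIV. f (idx p) * Gm k eps (idx p) (idx q)) = (if idx q \<le> k then f (k+1+idx q)
     else if 2*k+2 \<le> idx q \<and> idx q \<le> 3*k+1 then eps (idx q - (2*k+1)) * f (idx q) else 0)"
  proof (cases q rule: index_cases)
    case (U a)
    have "(\<Sum>p\<in>UNIV. f (idx p) * Gm k eps (idx p) (idx q)) = f (idx (ix (k+1+a))) * Gm k eps (idx (ix (k+1+a))) (idx q)"
      by (rule sum_single_label) (use U in \<open>auto simp: Gm_def U0\<close>)
    then show ?thesis using U by (simp add: Gm_def)
  next
    case (V a)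
    have "(\<Sum>p\<in>UNIV. f (idx p) * Gm k eps (idx p) (idx q)) = 0"
      by (rule sum.neutral) (use V in \<open>auto simp: Gm_def U0\<close>)
    then show ?thesis using V by simp
  next
    case (S i)
    have "(\<Sum>p\<in>UNIV. f (idx p) * Gm k eps (idx p) (idx q)) = f (idx q) * Gm k eps (idx q) (idx q)"
      by (rule sum_single_label[where m="idx q", unfolded ix_idx]) (use S in \<open>auto simp: Gm_def U0\<close>)
    then show ?thesis using S by (simp add: Gm_def mult.commute)
  qed
  ultimately show ?thesis by (simp add: gF_nth distrib_left sum.distrib)
qed

lemma sum_raise_gF:
  assumes V0: "\<And>m. k < m \<Longrightarrow> m \<le> 2*k+1 \<Longrightarrow> h m = 0"
  shows "(\<Sum>p\<in>UNIV. raise k eps h (idx p) * g y $ p $ q) = h (idx q)"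
proof -
  have "eps i * eps i = 1" if "1 \<le> i" "i \<le> k" for i using bspec[OF eps_sign, of i] that by auto
  then show ?thesis
    using idx_less[of q] V0[of "idx q"]
    by (subst sum_lower_gF) (auto simp: raise_def mult.assoc[symmetric])
qed

lemma bilin_Dg: "bilin (Dg y v) w z = trisum (\<lambda>c b q. uu_block_partial k F (Yc y) (idx c) (idx b) (idx q)) v w z"
proof -
  have "bilin (Dg y v) w z = (\<Sum>p\<in>UNIV. \<Sum>q\<in>UNIV. \<Sum>r\<in>UNIV.
      v $ r * w $ p * z $ q * uu_block_partial k F (Yc y) (idx r) (idx p) (idx q))"
    unfolding bilin_def Dg_def by (simp add: sum_distrib_left sum_distrib_right mult_ac)
  also have "\<dots> = trisum (\<lambda>c b q. uu_block_partial k F (Yc y) (idx c) (idx b) (idx q)) v w z"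
    unfolding trisum_def by (subst sum.swap, subst (2) sum.swap) simp
  finally show ?thesis .
qed

lemma bilin_christoffel_map_Gam:
  "bilin (g y) (christoffel_map Gam y v w) z
     = trisum (\<lambda>c b q. koszul_comb (uu_block_partial k F (Yc y)) (idx c) (idx b) (idx q)) v w z"
proof -
  let ?K = "\<lambda>c b q. koszul_comb (uu_block_partial k F (Yc y)) (idx c) (idx b) (idx q)"
  have V0: "koszul_comb (uu_block_partial k F (Yc y)) a b m = 0" if "k < m" "m \<le> 2*k+1" for a b m
    using uu_block_partial_V[OF that] by (simp add: koszul_comb_def)
  have col: "bilin (g y) (Gam y c *v axis b 1) z = (\<Sum>q\<in>UNIV. z $ q * ?K c b q)" for c b
  proof -
    have "bilin (g y) (Gam y c *v axis b 1) z = (\<Sum>q\<in>UNIV. z $ q *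
        (\<Sum>p\<in>UNIV. raise k eps (koszul_comb (uu_block_partial k F (Yc y)) (idx c) (idx b)) (idx p) * g y $ p $ q))"
      unfolding bilin_def
      by (subst sum.swap) (simp add: matrix_vector_mult_basis column_def Gam_def christoffel_def
          sum_distrib_left mult_ac)
    then show ?thesis by (simp add: sum_raise_gF V0)
  qed
  have "bilin (g y) (christoffel_map Gam y v w) z = (\<Sum>c\<in>UNIV. v $ c * (\<Sum>b\<in>UNIV. w $ b * bilin (g y) (Gam y c *v axis b 1) z))"
    unfolding christoffel_map_def
    by (simp add: bilin_sum_left bilin_scaleR_left linear_eq_sum_axis[of "(*v) (Gam y _)" w]
        bilin_sum_right bilin_scaleR_right)
  then show ?thesis unfolding trisum_def col by (simp add: sum_distrib_left mult_ac)
qed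

lemma koszul_gF:
  "bilin (g y) (christoffel_map Gam y v w) z = (bilin (Dg y v) w z + bilin (Dg y w) v z - bilin (Dg y z) v w) / 2"
proof -
  let ?D = "\<lambda>c b q. uu_block_partial k F (Yc y) (idx c) (idx b) (idx q)"
  have "bilin (Dg y w) v z = trisum (\<lambda>c b q. ?D b c q) v w z"
    unfolding bilin_Dg by (rule trisum_swap12)
  moreover have "bilin (Dg y z) v w = trisum (\<lambda>c b q. ?D q c b) v w z"
    unfolding bilin_Dg by (rule trisum_rotate[symmetric])
  ultimately show ?thesis
    unfolding bilin_christoffel_map_Gam bilin_Dg koszul_comb_def
    by (simp only: trisum_add trisum_diff trisum_divide)
qed

abbreviation K :: "real^'n \<Rightarrow> 'n \<Rightarrow> 'n \<Rightarrow> real^'n^'n" where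
  "K y \<equiv> curvature_matrix (Gam y) (DGam y)"

lemma curvature_matrix_nth: "K y c d $ p $ r =
    christoffel_partial k eps F (Yc y) (idx c) (idx p) (idx d) (idx r)
  - christoffel_partial k eps F (Yc y) (idx d) (idx p) (idx c) (idx r)
  + (\<Sum>m\<in>UNIV. christoffel k eps F (Yc y) (idx p) (idx c) (idx m) * christoffel k eps F (Yc y) (idx m) (idx d) (idx r))
  - (\<Sum>m\<in>UNIV. christoffel k eps F (Yc y) (idx p) (idx d) (idx m) * christoffel k eps F (Yc y) (idx m) (idx c) (idx r))"
proof -
  have "(\<Sum>t\<in>UNIV. axis c (1::real) $ t * X t) = X c" for c and X :: "'n \<Rightarrow> real"
    by (simp add: axis_nth_eq if_distrib[of "\<lambda>x. x * _"] cong: if_cong)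
  then show ?thesis by (simp add: curvature_matrix_def DGam_def Gam_def matrix_matrix_mult_def)
qed

lemma sum_christoffel_through_S:
  assumes i: "1 \<le> i" "i \<le> k"
    and others: "\<And>j. 1 \<le> j \<Longrightarrow> j \<le> k \<Longrightarrow> j \<noteq> i \<Longrightarrow>
       christoffel k eps F Y P c (2*k+1+j) * christoffel k eps F Y (2*k+1+j) d R = 0"
  shows "(\<Sum>m\<in>UNIV. christoffel k eps F Y P c (idx m) * christoffel k eps F Y (idx m) d R)
       = christoffel k eps F Y P c (2*k+1+i) * christoffel k eps F Y (2*k+1+i) d R"
proof -
  have "(\<Sum>m\<in>UNIV. christoffel k eps F Y P c (idx m) * christoffel k eps F Y (idx m) d R)
     = christoffel k eps F Y P c (idx (ix (2*k+1+i))) * christoffel k eps F Y (idx (ix (2*k+1+i))) d R"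
  proof (rule sum_single_label)
    fix m assume m: "idx m \<noteq> 2*k+1+i"
    show "christoffel k eps F Y P c (idx m) * christoffel k eps F Y (idx m) d R = 0"
    proof (cases m rule: index_cases)
      case (U a) then show ?thesis by (simp add: christoffel_def raise_def)
    next
      case (V a)
      then have "uu_block_partial k F Y r' a' b' = 0" if "k+1+a \<in> {r', a', b'}" for r' a' b'
        using uu_block_partial_V[of k "k+1+a"] that by auto
      then have "koszul_comb (uu_block_partial k F Y) c (k+1+a) = (\<lambda>_. 0)"
        by (simp add: fun_eq_iff koszul_comb_def)
      then show ?thesis using V by (simp add: christoffel_def raise_def)
    next
      case (S j)
      then have "j \<noteq> i" using m by auto
      then show ?thesis using others[OF S(1,2)] S by simp
    qed
  qed (use i in simp)
  then show ?thesis using i by simp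
qed

lemma curvature_U0Ui_nth:
  assumes i: "1 \<le> i" "i \<le> k"
  shows "K y (ix 0) (ix i) $ p $ r = curv_U0Ui k eps F (Yc y) i (idx p) (idx r)"
proof -
  let ?\<Gamma> = "christoffel k eps F (Yc y)"
  have l: "idx (ix 0) = 0" "idx (ix i) = i" using i by simp_all
  have s1: "(\<Sum>m\<in>UNIV. ?\<Gamma> (idx p) 0 (idx m) * ?\<Gamma> (idx m) i (idx r))
      = ?\<Gamma> (idx p) 0 (2*k+1+i) * ?\<Gamma> (2*k+1+i) i (idx r)"
    by (rule sum_christoffel_through_S[OF i]) (simp add: christoffel_i_S[OF i])
  have s2: "(\<Sum>m\<in>UNIV. ?\<Gamma> (idx p) i (idx m) * ?\<Gamma> (idx m) 0 (idx r))
      = ?\<Gamma> (idx p) i (2*k+1+i) * ?\<Gamma> (2*k+1+i) 0 (idx r)"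
    by (rule sum_christoffel_through_S[OF i]) (simp add: christoffel_i_S[OF i])
  show ?thesis unfolding curvature_matrix_nth l s1 s2 by (simp add: curv_U0Ui_def)
qed

lemma curvature_UiSi_nth:
  assumes i: "1 \<le> i" "i \<le> k"
  shows "K y (ix i) (ix (2*k+1+i)) $ p $ r = curv_UiSi k eps F (Yc y) i (idx p) (idx r)"
proof -
  let ?\<Gamma> = "christoffel k eps F (Yc y)"
  have l: "idx (ix (2*k+1+i)) = 2*k+1+i" "idx (ix i) = i" using i by simp_all
  have s1: "(\<Sum>m\<in>UNIV. ?\<Gamma> (idx p) i (idx m) * ?\<Gamma> (idx m) (2*k+1+i) (idx r))
      = ?\<Gamma> (idx p) i (2*k+1+i) * ?\<Gamma> (2*k+1+i) (2*k+1+i) (idx r)"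
    by (rule sum_christoffel_through_S[OF i]) (simp add: christoffel_i_S[OF i])
  have s2: "(\<Sum>m\<in>UNIV. ?\<Gamma> (idx p) (2*k+1+i) (idx m) * ?\<Gamma> (idx m) i (idx r))
      = ?\<Gamma> (idx p) (2*k+1+i) (2*k+1+i) * ?\<Gamma> (2*k+1+i) i (idx r)"
    by (rule sum_christoffel_through_S[OF i]) (simp add: christoffel_i_S[OF i])
  show ?thesis unfolding curvature_matrix_nth l s1 s2 by (simp add: curv_UiSi_def)
qed

lemma bilin_curvature_U0Ui:
  assumes i: "1 \<le> i" "i \<le> k"
  shows "bilin (g y) (K y (ix 0) (ix i) *v z) w
    = (1 + deriv (F i) (Yc y i)) * wedge (ix i) (ix (2*k+1+i)) z w
      + eps i * (F i (Yc y i))^2 * wedge (ix i) (ix 0) z w"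
proof -
  let ?a = "1 + deriv (F i) (Yc y i)" and ?b = "eps i * (F i (Yc y i))^2"
  have epsi: "eps i * eps i = 1" using bspec[OF eps_sign, of i] i by auto
  have lowered: "(\<Sum>p\<in>UNIV. K y (ix 0) (ix i) $ p $ r * g y $ p $ q)
     = ?a * ((if idx r = i \<and> idx q = 2*k+1+i then 1 else 0) - (if idx r = 2*k+1+i \<and> idx q = i then 1 else 0))
      + ?b * ((if idx r = i \<and> idx q = 0 then 1 else 0) - (if idx r = 0 \<and> idx q = i then 1 else 0))" for r q
    unfolding curvature_U0Ui_nth[OF i]
    by (subst sum_lower_gF) (simp_all add: curv_U[OF i] curv_U0Ui_lowered[where eps=eps and F=F and Y="Yc y", OF i epsi idx_less])
  have l: "i < 3*k+2" "2*k+1+i < 3*k+2" "0 < 3*k+2" using i by auto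
  show ?thesis
    unfolding bilin_matrix_vector lowered double_sum_lincomb
    by (simp only: sum_label_wedge[OF l(1,2)] sum_label_wedge[OF l(1,3)])
qed

lemma bilin_curvature_UiSi:
  assumes i: "1 \<le> i" "i \<le> k"
  shows "bilin (g y) (K y (ix i) (ix (2*k+1+i)) *v z) w = (1 + deriv (F i) (Yc y i)) * wedge (ix 0) (ix i) z w"
proof -
  let ?a = "1 + deriv (F i) (Yc y i)"
  have lowered: "(\<Sum>p\<in>UNIV. K y (ix i) (ix (2*k+1+i)) $ p $ r * g y $ p $ q)
     = ?a * ((if idx r = 0 \<and> idx q = i then 1 else 0) - (if idx r = i \<and> idx q = 0 then 1 else 0))" for r q
    unfolding curvature_UiSi_nth[OF i]
    by (subst sum_lower_gF) (simp_all add: curv_U[OF i] curv_UiSi_lowered[where eps=eps and F=F and Y="Yc y", OF i idx_less])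
  have l: "i < 3*k+2" "0 < 3*k+2" using i by auto
  show ?thesis
    unfolding bilin_matrix_vector lowered
    by (simp only: sum_label_wedge[OF l(2,1), symmetric] sum_distrib_left mult_ac)
qed

section \<open>The manifold is locally indecomposable\<close>

lemma locally_decomposable_parallel_projection:
  assumes "locally_decomposable_at g P"
  obtains Pm where "Pm ** Pm = Pm" "Pm \<noteq> 0" "Pm \<noteq> mat 1"
    "\<And>u w. bilin (g P) (Pm *v u) w = bilin (g P) u (Pm *v w)"
    "\<And>c d. Pm ** K P c d = K P c d ** Pm"
proof -
  obtain U W :: "(real^'n) set" and \<phi> \<psi> :: "real^'n \<Rightarrow> real^'n"
      and h :: "real^'n \<Rightarrow> real^'n^'n" and I :: "'n set" where
    U: "open U" "P \<in> U" and W: "open W" and I: "I \<noteq> {}" "I \<noteq> UNIV"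
    and h_metric: "metric_on W h"
    and h_block: "\<forall>x\<in>W. \<forall>i j. i \<in> I \<and> j \<notin> I \<longrightarrow> h x $ i $ j = 0 \<and> h x $ j $ i = 0"
    and h_I: "\<forall>x\<in>W. \<forall>y\<in>W. \<forall>i\<in>I. \<forall>j\<in>I. h x $ i $ j = h (splice I x y) $ i $ j"
    and h_J: "\<forall>x\<in>W. \<forall>y\<in>W. \<forall>i\<in>-I. \<forall>j\<in>-I. h x $ i $ j = h (splice I y x) $ i $ j"
    and maps: "\<phi> ` W = U" "\<psi> ` U = W" "\<forall>x\<in>W. \<psi> (\<phi> x) = x" "\<forall>y\<in>U. \<phi> (\<psi> y) = y"
    and smooth: "smooth_on W \<phi>" "smooth_on U \<psi>"
    and h_pullback: "\<forall>x\<in>W. \<forall>i j. h x $ i $ j = bilin (g (\<phi> x)) (frechet_derivative \<phi> (at x) (axis i 1))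
                          (frechet_derivative \<phi> (at x) (axis j 1))"
    using assms unfolding locally_decomposable_at_def by (elim exE conjE) (rule that; assumption)
  have h_smooth: "smooth_on W h" using h_metric by (simp add: metric_on_def)
  obtain \<phi>' \<phi>'' where d\<phi>: "\<And>x. x \<in> W \<Longrightarrow> (\<phi> has_derivative \<phi>' x) (at x)"
      and dd\<phi>: "\<And>x v. x \<in> W \<Longrightarrow> ((\<lambda>x. \<phi>' x v) has_derivative \<phi>'' v x) (at x)"
    using smooth_on_has_derivative[OF smooth(1)] by metis
  obtain \<psi>' \<psi>'' where d\<psi>: "\<And>y. y \<in> U \<Longrightarrow> (\<psi> has_derivative \<psi>' y) (at y)"
      and dd\<psi>: "\<And>y v. y \<in> U \<Longrightarrow> ((\<lambda>y. \<psi>' y v) has_derivative \<psi>'' v y) (at y)"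
    using smooth_on_has_derivative[OF smooth(2)] by metis
  obtain h' where dh: "\<And>x. x \<in> W \<Longrightarrow> (h has_derivative h' x) (at x)"
    using smooth_on_has_derivative[OF h_smooth] by metis
  interpret chart: product_chart g Dg Gam U W \<phi> \<psi> h I \<phi>' \<phi>'' \<psi>' \<psi>'' h'
  proof
    show "open U" "open W" "I \<noteq> {}" "I \<noteq> UNIV" by fact+
    show "transpose (h x) = h x" "det (h x) \<noteq> 0" if "x \<in> W" for x
      using h_metric that by (auto simp: metric_on_def)
    show "h x $ i $ j = 0 \<and> h x $ j $ i = 0" if "x \<in> W" "i \<in> I" "j \<notin> I" for x i j
      using h_block that by blast
    show "h x $ i $ j = h (splice I x y) $ i $ j" if "x \<in> W" "y \<in> W" "i \<in> I" "j \<in> I" for x y i j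
      using h_I that by blast
    show "h x $ i $ j = h (splice I y x) $ i $ j" if "x \<in> W" "y \<in> W" "i \<notin> I" "j \<notin> I" for x y i j
      using h_J that unfolding Ball_def Compl_iff by blast
    show "\<phi> x \<in> U" "\<psi> (\<phi> x) = x" if "x \<in> W" for x using maps that by auto
    show "\<psi> y \<in> W" "\<phi> (\<psi> y) = y" if "y \<in> U" for y using maps that by auto
    show "h x $ i $ j = bilin (g (\<phi> x)) (\<phi>' x (axis i 1)) (\<phi>' x (axis j 1))" if "x \<in> W" for x i j
      using h_pullback frechet_derivative_at[OF d\<phi>[OF that]] that by simp
    show "(g has_derivative Dg y) (at y)" for y by (rule gF_deriv)
    show "bilin (g y) (christoffel_map Gam y v w) z = (bilin (Dg y v) w z + bilin (Dg y w) v z - bilin (Dg y z) v w) / 2"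
      for y v w z by (rule koszul_gF)
  qed (fact d\<phi> dd\<phi> d\<psi> dd\<psi> dh gF_sym)+
  show ?thesis
    by (rule that[of "chart.proj_field P"])
       (simp_all add: chart.proj_field_idem[OF U(2)] chart.proj_field_nonzero[OF U(2)]
         chart.proj_field_ne_id[OF U(2)] chart.proj_field_selfadjoint[OF U(2)]
         chart.proj_field_commutes_curvature[OF U(2) Gam_deriv])
qed

theorem gF_locally_indecomposable:
  assumes k: "k \<ge> 1" and F'_ne: "\<forall>i\<in>{1..k}. \<forall>u. deriv (F i) u + 1 \<noteq> 0"
  shows "\<not> locally_decomposable_at g P"
proof
  assume "locally_decomposable_at g P"
  then obtain Pm where Pm: "Pm ** Pm = Pm" "Pm \<noteq> 0" "Pm \<noteq> mat 1"
    and selfadj: "\<And>u w. bilin (g P) (Pm *v u) w = bilin (g P) u (Pm *v w)"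
    and comm_K: "\<And>c d. Pm ** K P c d = K P c d ** Pm"
    using locally_decomposable_parallel_projection by blast
  have comm: "bilin (g P) (K P c d *v (Pm *v z)) w = bilin (g P) (K P c d *v z) (Pm *v w)" for c d z w
    by (rule selfadjoint_commuting_transfer[OF comm_K selfadj])
  have F'_ne': "1 + deriv (F i) (Yc P i) \<noteq> 0" if "1 \<le> i" "i \<le> k" for i
    using F'_ne that by (simp add: add.commute)
  have "(*v) Pm = id \<or> (*v) Pm = (\<lambda>x. 0)"
  proof (rule idempotent_trivial_if_wedges_symmetric[OF k, where G="g P"])
    show "Pm *v (Pm *v x) = Pm *v x" for x
      by (simp add: matrix_vector_mul_assoc Pm(1))
    show "bilin (g P) (Pm *v x) y = bilin (g P) x (Pm *v y)" for x y
      by (rule selfadj)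
    show wedge_0i: "wedge (ix 0) (ix i) (Pm *v z) w = wedge (ix 0) (ix i) z (Pm *v w)"
      if "1 \<le> i" "i \<le> k" for i z w
      using comm[of "ix i" "ix (2*k+1+i)" z w] F'_ne'[OF that]
        bilin_curvature_UiSi[OF that, of P "Pm *v z" w] bilin_curvature_UiSi[OF that, of P z "Pm *v w"]
      by simp
    show "wedge (ix i) (ix (2*k+1+i)) (Pm *v z) w = wedge (ix i) (ix (2*k+1+i)) z (Pm *v w)"
      if "1 \<le> i" "i \<le> k" for i z w
    proof -
      have "wedge (ix i) (ix 0) (Pm *v z) w = wedge (ix i) (ix 0) z (Pm *v w)"
        using wedge_0i[OF that, of z w] by (simp add: wedge_def algebra_simps)
      then show ?thesis
        using comm[of "ix 0" "ix i" z w] F'_ne'[OF that]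
          bilin_curvature_U0Ui[OF that, of P "Pm *v z" w] bilin_curvature_U0Ui[OF that, of P z "Pm *v w"]
        by simp
    qed
    show "g P $ ix (k+1+a) = axis (ix a) 1" if "a \<le> k" for a
      by (rule gF_V_row[OF that])
  qed (simp_all add: gF_sym)
  then have "Pm = mat 1 \<or> Pm = 0"
    by (auto simp: fun_eq_iff matrix_eq[of Pm])
  then show False using Pm(2,3) by blast
qed

end

theorem theorem1p7:
  fixes k :: nat and idx :: "'n::finite \<Rightarrow> nat" and eps :: "nat \<Rightarrow> real"
    and F :: "nat \<Rightarrow> real \<Rightarrow> real"
  assumes "k \<ge> 1"
    and "bij_betw idx UNIV {..<3*k+2}"
    and "\<forall>i\<in>{1..k}. eps i = 1 \<or> eps i = -1"
    and "\<forall>i\<in>{1..k}. smooth_on UNIV (F i)"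
  shows "\<not> decomposable_model (model_ip k idx eps) (model_R k idx)
    \<and> ((\<forall>i\<in>{1..k}. \<forall>u. deriv (F i) u + 1 \<noteq> 0)
         \<longrightarrow> (\<forall>P. \<not> locally_decomposable_at (gF k idx eps F) P))"
proof -
  interpret gF_setting k idx eps F
    by unfold_locales (use assms in auto)
  show ?thesis
    using model_indecomposable[OF assms(1)] gF_locally_indecomposable[OF assms(1)] by blast
qed

end
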